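(* Let $O\in O(2n)$, $k\in[n]$, $S\in\mathcal S_{2k}$ and $R\in\mathcal D_{2k}$. Define the deterministic post-processing of the outcomes $(\mathbf q,X)$ of $\mathsf G^O$ by $(\mathbf q,X)\mapsto e_S=\operatorname{sgn}(\det(O_{R,S}))\,x_S\,q_R\in\{\pm1\}$ (with the convention $\operatorname{sgn}(0)=1$). Then for each $e\in\{\pm1\}$, $$\sum_{(\mathbf q,X):\,e_S=e}\mathsf G^O(\mathbf q,X)=\tfrac12\big(I+e\,|\det(O_{R,S})|\,\gamma_S\big),$$ i.e. $\mathsf G^O$ jointly measures the unsharp observable $\mathsf M_S^{\eta}$ with sharpness $\eta=|\det(O_{R,S})|$.
   Context: Let $\gamma_1,\dots,\gamma_{2n}$ be Majorana operators on $(\mathbb C^2)^{\otimes n}$ (Hermitian, $\gamma_j\gamma_{j'}+\gamma_{j'}\gamma_j=2\delta_{jj'}I$); $\gamma_S=i^{\binom m2}\gamma_{j_1}\cdots\gamma_{j_m}$ for $S=\{j_1<\dots<j_m\}$, $\mathcal S_m=\{S\subseteq[2n]:|S|=m\}$. $\mathcal D_2=\{\{2j-1,2j\}:j\in[n]\}$, $\mathcal D_{2k}$ = unions of $k$ distinct elements of $\mathcal D_2$; for $R=R_1\cup\dots\cup R_k$ and $\mathbf q=(q_{R'})_{R'\in\mathcal D_2}\in\{\pm1\}^n$, $q_R=\prod_iq_{R_i}$. $O_{R,S}$ is the submatrix of $O$ with rows $R$, columns $S$. $x_S=(-1)^{|X||S|-|S\cap X|}$ for $X\subseteq[2n]$.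 For $R\in\mathcal D_2$: $\mathsf G^O_R(q,X)=2^{-2n-1}\big(I+q\sum_{S\in\mathcal S_2}x_S\det(O_{R,S})\gamma_S\big)$; $\mathsf G^O(\mathbf q,X)=(2^{2n})^{n-1}\prod_{R\in\mathcal D_2}\mathsf G^O_R(q_R,X)$. $\mathsf M^\eta_S(e)=\frac12(I+e\eta\gamma_S)$. *)

theory Defs
  imports "Jordan_Normal_Form.Schur_Decomposition" "Jordan_Normal_Form.Determinant"
    "HOL-Library.FuncSet"
begin

text \<open>Operators on (C^2)^{\<otimes> n} are complex matrices of dimension 2^n (JNF).
 Indices of Majoranas and of the 2n x 2n real matrix Ot are 1-based: [2n] = {1..2n};
 the JNF entry Ot $$ (i-1, j-1) is the (i,j) entry of Ot.\<close>

definition maj_dim :: "nat \<Rightarrow> nat" where "maj_dim n = 2 ^ n"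

definition majorana_ops :: "nat \<Rightarrow> (nat \<Rightarrow> complex mat) \<Rightarrow> bool" where
  "majorana_ops n \<gamma> \<longleftrightarrow>
     (\<forall>j\<in>{1..2*n}. \<gamma> j \<in> carrier_mat (maj_dim n) (maj_dim n) \<and> mat_adjoint (\<gamma> j) = \<gamma> j) \<and>
     (\<forall>j\<in>{1..2*n}. \<forall>j'\<in>{1..2*n}.
        \<gamma> j * \<gamma> j' + \<gamma> j' * \<gamma> j = (if j = j' then 2 \<cdot>\<^sub>m 1\<^sub>m (maj_dim n) else 0\<^sub>m (maj_dim n) (maj_dim n)))"

definition orth_group :: "nat \<Rightarrow> real mat set" where
  "orth_group m = {Ot. Ot \<in> carrier_mat m m \<and> Ot * transpose_mat Ot = 1\<^sub>m m}"

definition msum :: "nat \<Rightarrow> ('i \<Rightarrow> complex mat) \<Rightarrow> 'i set \<Rightarrow> complex mat" where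
  "msum N f A = mat N N (\<lambda>ij. \<Sum>a\<in>A. f a $$ ij)"

definition gammaS :: "nat \<Rightarrow> (nat \<Rightarrow> complex mat) \<Rightarrow> nat set \<Rightarrow> complex mat" where
  "gammaS n \<gamma> S = (\<i> ^ (card S choose 2)) \<cdot>\<^sub>m
      foldr (\<lambda>j M. \<gamma> j * M) (sorted_list_of_set S) (1\<^sub>m (maj_dim n))"

definition SS :: "nat \<Rightarrow> nat \<Rightarrow> nat set set" where
  "SS n m = {S. S \<subseteq> {1..2*n} \<and> card S = m}"

definition pairD :: "nat \<Rightarrow> nat set" where "pairD j = {2*j - 1, 2*j}"

definition DD :: "nat \<Rightarrow> nat \<Rightarrow> nat set set" where
  "DD n k = {\<Union>(pairD ` J) | J. J \<subseteq> {1..n} \<and> card J = k}"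

text \<open>q_R for R in D_{2k}, where q j is q_{{2j-1,2j}}.\<close>
definition qR :: "nat \<Rightarrow> (nat \<Rightarrow> int) \<Rightarrow> nat set \<Rightarrow> int" where
  "qR n q R = (\<Prod>j\<in>{j\<in>{1..n}. pairD j \<subseteq> R}. q j)"

definition submat :: "real mat \<Rightarrow> nat set \<Rightarrow> nat set \<Rightarrow> real mat" where
  "submat Ot R S = (let rs = sorted_list_of_set R; ss = sorted_list_of_set S in
     mat (card R) (card S) (\<lambda>(a,b). Ot $$ (rs ! a - 1, ss ! b - 1)))"

definition xS :: "nat set \<Rightarrow> nat set \<Rightarrow> int" where
  "xS X S = (-1) ^ (card X * card S - card (S \<inter> X))"

definition G_R :: "nat \<Rightarrow> (nat \<Rightarrow> complex mat) \<Rightarrow> real mat \<Rightarrow> nat set \<Rightarrow> int \<Rightarrow> nat set \<Rightarrow> complex mat" where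
  "G_R n \<gamma> Ot R q X = (1 / 2 ^ (2*n+1)) \<cdot>\<^sub>m
     (1\<^sub>m (maj_dim n) + of_int q \<cdot>\<^sub>m
       msum (maj_dim n) (\<lambda>S. (of_int (xS X S) * complex_of_real (det (submat Ot R S))) \<cdot>\<^sub>m gammaS n \<gamma> S) (SS n 2))"

text \<open>G^Ot(q,X) = (2^{2n})^{n-1} prod_{j=1..n} G_{{2j-1,2j}}(q_j, X) (factors commute).\<close>
definition G_op :: "nat \<Rightarrow> (nat \<Rightarrow> complex mat) \<Rightarrow> real mat \<Rightarrow> (nat \<Rightarrow> int) \<Rightarrow> nat set \<Rightarrow> complex mat" where
  "G_op n \<gamma> Ot q X = ((2 ^ (2*n)) ^ (n - 1)) \<cdot>\<^sub>m
     foldr (\<lambda>j M. G_R n \<gamma> Ot (pairD j) (q j) X * M) [1..<n+1] (1\<^sub>m (maj_dim n))"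

definition outcomes :: "nat \<Rightarrow> ((nat \<Rightarrow> int) \<times> nat set) set" where
  "outcomes n = (PiE {1..n} (\<lambda>_. {-1, 1})) \<times> Pow {1..2*n}"

definition sgn1 :: "real \<Rightarrow> int" where "sgn1 x = (if x < 0 then -1 else 1)"

definition eS :: "nat \<Rightarrow> real mat \<Rightarrow> nat set \<Rightarrow> nat set \<Rightarrow> (nat \<Rightarrow> int) \<Rightarrow> nat set \<Rightarrow> int" where
  "eS n Ot R S q X = sgn1 (det (submat Ot R S)) * xS X S * qR n q R"

end

theory Submission
  imports Defs "HOL-Combinatorics.Permutations"
begin

text \<open>
 For fixed \<open>X\<close> put \<open>u r = (\<Sum>a. O(r,a) (-1)^[a \<in> X] \<gamma> a)\<close> (\<open>mode X r\<close> below). By the anticommutation relations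
 and the orthogonality of the rows of \<open>O\<close>, \<open>\<i> u (2j-1) u (2j)\<close> is exactly the quadratic operator in
 \<open>G_{2j-1,2j}(q, X)\<close>, so \<open>G(q, X)\<close> is a product of the factors \<open>I + q j \<i> u (2j-1) u (2j)\<close>
 (\<open>pair_op X j = \<i> u (2j-1) u (2j)\<close>).
 Summing against the character \<open>q_R\<close> over all \<open>q\<close> keeps only the product \<open>\<i>^k \<Prod>r\<in>R. u r\<close>.
 Expanding it over all maps \<open>f : R \<rightarrow> [2n]\<close> and summing against the character \<open>x_S\<close> over all \<open>X\<close>
 kills every \<open>f\<close> except the bijections onto \<open>S\<close>; reordering the Majoranas along such a bijection
 costs its sign, and these signs assemble \<open>det O_{R,S} \<gamma>_S\<close>. Hence \<open>\<Sum> x_S q_R G = det O_{R,S} \<gamma>_S\<close>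
 while \<open>\<Sum> G = I\<close>, and the theorem follows from \<open>[e_S = e] = (1 + e e_S)/2\<close>.
\<close>

section \<open>Finite sums and products of square matrices\<close>

lemma smult_smult_mat: "a \<cdot>\<^sub>m (b \<cdot>\<^sub>m (A :: 'a :: semigroup_mult mat)) = (a * b) \<cdot>\<^sub>m A"
  by (rule eq_matI) (auto simp: mult.assoc)

lemma one_smult_mat [simp]: "(1 :: 'a :: monoid_mult) \<cdot>\<^sub>m A = A"
  by (rule eq_matI) auto

lemma mult_carrier_mat_square [simp]:
  "A \<in> carrier_mat N N \<Longrightarrow> B \<in> carrier_mat N N \<Longrightarrow> A * B \<in> carrier_mat N N"
  by (rule mult_carrier_mat)

lemma zero_smult_mat: "A \<in> carrier_mat nr nc \<Longrightarrow> (0 :: 'a :: mult_zero) \<cdot>\<^sub>m A = 0\<^sub>m nr nc"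
  by (rule eq_matI) auto

lemma msum_carrier [simp]: "msum N f A \<in> carrier_mat N N"
  by (simp add: msum_def)

lemma msum_dim [simp]: "dim_row (msum N f A) = N" "dim_col (msum N f A) = N"
  by (simp_all add: msum_def)

lemma msum_cong: "(\<And>a. a \<in> A \<Longrightarrow> f a = g a) \<Longrightarrow> msum N f A = msum N g A"
  by (simp add: msum_def)

lemma msum_empty [simp]: "msum N f {} = 0\<^sub>m N N"
  by (auto simp: msum_def)

lemma msum_insert: "finite A \<Longrightarrow> a \<notin> A \<Longrightarrow> f a \<in> carrier_mat N N \<Longrightarrow>
    msum N f (insert a A) = f a + msum N f A"
  by (rule eq_matI) (auto simp: msum_def)

lemma msum_Un_disjoint: "finite A \<Longrightarrow> finite B \<Longrightarrow> A \<inter> B = {} \<Longrightarrow>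
    msum N f (A \<union> B) = msum N f A + msum N f B"
  by (rule eq_matI) (auto simp: msum_def sum.union_disjoint)

lemma msum_reindex: "inj_on h A \<Longrightarrow> msum N f (h ` A) = msum N (f \<circ> h) A"
  by (rule eq_matI) (auto simp: msum_def sum.reindex)

lemma msum_swap: "msum N (\<lambda>a. msum N (f a) B) A = msum N (\<lambda>b. msum N (\<lambda>a. f a b) A) B"
  by (rule eq_matI) (simp_all add: msum_def, rule sum.swap)

lemma msum_Sigma: "finite A \<Longrightarrow> finite B \<Longrightarrow>
    msum N f (A \<times> B) = msum N (\<lambda>a. msum N (\<lambda>b. f (a, b)) B) A"
  by (rule eq_matI) (auto simp: msum_def sum.cartesian_product)

lemma msum_add:
  assumes "\<And>a. a \<in> A \<Longrightarrow> f a \<in> carrier_mat N N" "\<And>a. a \<in> A \<Longrightarrow> g a \<in> carrier_mat N N"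
  shows "msum N (\<lambda>a. f a + g a) A = msum N f A + msum N g A"
proof (rule eq_matI)
  fix i j assume ij: "i < dim_row (msum N f A + msum N g A)" "j < dim_col (msum N f A + msum N g A)"
  have "\<And>a. a \<in> A \<Longrightarrow> (f a + g a) $$ (i,j) = f a $$ (i,j) + g a $$ (i,j)"
    using ij assms by (metis carrier_matD(1,2) index_add_mat(1) index_add_mat(2) index_add_mat(3) msum_carrier)
  then show "msum N (\<lambda>a. f a + g a) A $$ (i, j) = (msum N f A + msum N g A) $$ (i, j)"
    using ij by (simp add: msum_def sum.distrib)
qed (auto simp: msum_def)

lemma msum_smult:
  assumes "\<And>a. a \<in> A \<Longrightarrow> f a \<in> carrier_mat N N"
  shows "msum N (\<lambda>a. c \<cdot>\<^sub>m f a) A = c \<cdot>\<^sub>m msum N f A"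
proof (rule eq_matI)
  fix i j assume ij: "i < dim_row (c \<cdot>\<^sub>m msum N f A)" "j < dim_col (c \<cdot>\<^sub>m msum N f A)"
  have "\<And>a. a \<in> A \<Longrightarrow> (c \<cdot>\<^sub>m f a) $$ (i,j) = c * f a $$ (i,j)"
    using ij assms by (metis carrier_matD(1,2) index_smult_mat msum_carrier)
  then show "msum N (\<lambda>a. c \<cdot>\<^sub>m f a) A $$ (i, j) = (c \<cdot>\<^sub>m msum N f A) $$ (i, j)"
    using ij by (simp add: msum_def sum_distrib_left)
qed (auto simp: msum_def)

lemma msum_smult_const: "M \<in> carrier_mat N N \<Longrightarrow> msum N (\<lambda>a. c a \<cdot>\<^sub>m M) A = (\<Sum>a\<in>A. c a) \<cdot>\<^sub>m M"
  by (rule eq_matI) (auto simp: msum_def sum_distrib_right)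

lemma msum_filter: "finite A \<Longrightarrow>
    msum N f {a \<in> A. P a} = msum N (\<lambda>a. if P a then f a else 0\<^sub>m N N) A"
  by (rule eq_matI) (auto simp: msum_def sum.inter_filter intro!: sum.cong)

lemma msum_smult_msum_swap:
  assumes "\<And>f. f \<in> B \<Longrightarrow> M f \<in> carrier_mat N N"
  shows "msum N (\<lambda>X. w X \<cdot>\<^sub>m msum N (\<lambda>f. g X f \<cdot>\<^sub>m M f) B) A =
    msum N (\<lambda>f. (\<Sum>X\<in>A. w X * g X f) \<cdot>\<^sub>m M f) B"
proof (rule eq_matI)
  fix i j assume "i < dim_row (msum N (\<lambda>f. (\<Sum>X\<in>A. w X * g X f) \<cdot>\<^sub>m M f) B)"
    "j < dim_col (msum N (\<lambda>f. (\<Sum>X\<in>A. w X * g X f) \<cdot>\<^sub>m M f) B)"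
  then have ij: "i < N" "j < N" by auto
  have Mij: "\<And>f x. f \<in> B \<Longrightarrow> (x \<cdot>\<^sub>m M f) $$ (i, j) = x * M f $$ (i, j)"
    using assms ij by (metis carrier_matD(1) carrier_matD(2) index_smult_mat(1))
  have "msum N (\<lambda>X. w X \<cdot>\<^sub>m msum N (\<lambda>f. g X f \<cdot>\<^sub>m M f) B) A $$ (i, j)
     = (\<Sum>X\<in>A. w X * (\<Sum>f\<in>B. g X f * M f $$ (i, j)))"
    using ij Mij by (simp add: msum_def)
  also have "\<dots> = (\<Sum>f\<in>B. (\<Sum>X\<in>A. w X * g X f) * M f $$ (i, j))"
    by (simp add: sum_distrib_left sum_distrib_right mult.assoc) (rule sum.swap)
  also have "\<dots> = msum N (\<lambda>f. (\<Sum>X\<in>A. w X * g X f) \<cdot>\<^sub>m M f) B $$ (i, j)"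
    using ij Mij by (simp add: msum_def)
  finally show "msum N (\<lambda>X. w X \<cdot>\<^sub>m msum N (\<lambda>f. g X f \<cdot>\<^sub>m M f) B) A $$ (i, j) =
    msum N (\<lambda>f. (\<Sum>X\<in>A. w X * g X f) \<cdot>\<^sub>m M f) B $$ (i, j)" .
qed simp_all

lemma msum_mult_left:
  assumes "B \<in> carrier_mat N N" "finite A" "\<And>a. a \<in> A \<Longrightarrow> f a \<in> carrier_mat N N"
  shows "B * msum N f A = msum N (\<lambda>a. B * f a) A"
proof (rule eq_matI)
  fix i j assume ij: "i < dim_row (msum N (\<lambda>a. B * f a) A)" "j < dim_col (msum N (\<lambda>a. B * f a) A)"
  then have ij: "i < N" "j < N" by auto
  have "(B * msum N f A) $$ (i,j) = (\<Sum>l<N. B $$ (i,l) * (\<Sum>a\<in>A. f a $$ (l,j)))"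
    using ij assms by (simp add: scalar_prod_def msum_def lessThan_atLeast0)
  also have "\<dots> = (\<Sum>a\<in>A. \<Sum>l<N. B $$ (i,l) * f a $$ (l,j))"
    by (simp add: sum_distrib_left) (rule sum.swap)
  also have "\<dots> = (\<Sum>a\<in>A. (B * f a) $$ (i,j))"
  proof (rule sum.cong)
    fix a assume "a \<in> A" then have "f a \<in> carrier_mat N N" using assms by auto
    then show "(\<Sum>l<N. B $$ (i,l) * f a $$ (l,j)) = (B * f a) $$ (i,j)"
      using ij assms by (simp add: scalar_prod_def lessThan_atLeast0)
  qed simp
  finally show "(B * msum N f A) $$ (i, j) = msum N (\<lambda>a. B * f a) A $$ (i, j)"
    using ij by (simp add: msum_def)
qed (use assms in simp_all)

lemma msum_mult_right:
  assumes "B \<in> carrier_mat N N" "finite A" "\<And>a. a \<in> A \<Longrightarrow> f a \<in> carrier_mat N N"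
  shows "msum N f A * B = msum N (\<lambda>a. f a * B) A"
proof (rule eq_matI)
  fix i j assume ij: "i < dim_row (msum N (\<lambda>a. f a * B) A)" "j < dim_col (msum N (\<lambda>a. f a * B) A)"
  then have ij: "i < N" "j < N" by auto
  have "(msum N f A * B) $$ (i,j) = (\<Sum>l<N. (\<Sum>a\<in>A. f a $$ (i,l)) * B $$ (l,j))"
    using ij assms by (simp add: scalar_prod_def msum_def lessThan_atLeast0)
  also have "\<dots> = (\<Sum>a\<in>A. \<Sum>l<N. f a $$ (i,l) * B $$ (l,j))"
    by (simp add: sum_distrib_right) (rule sum.swap)
  also have "\<dots> = (\<Sum>a\<in>A. (f a * B) $$ (i,j))"
  proof (rule sum.cong)
    fix a assume "a \<in> A" then have "f a \<in> carrier_mat N N" using assms by auto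
    then show "(\<Sum>l<N. f a $$ (i,l) * B $$ (l,j)) = (f a * B) $$ (i,j)"
      using ij assms by (simp add: scalar_prod_def lessThan_atLeast0)
  qed simp
  finally show "(msum N f A * B) $$ (i, j) = msum N (\<lambda>a. f a * B) A $$ (i, j)"
    using ij by (simp add: msum_def)
qed (use assms in simp_all)

lemma msum_PiE_insert:
  assumes "x \<notin> S"
  shows "msum N F (PiE (insert x S) T) = msum N (\<lambda>y. msum N (\<lambda>g. F (g(x := y))) (PiE S T)) (T x)"
proof -
  have "msum N F (PiE (insert x S) T) = msum N (F \<circ> (\<lambda>(y, g). g(x := y))) (T x \<times> PiE S T)"
    unfolding PiE_insert_eq by (rule msum_reindex[OF inj_combinator[OF assms]])
  also have "\<dots> = msum N (\<lambda>y. msum N (\<lambda>g. F (g(x := y))) (PiE S T)) (T x)"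
    by (rule eq_matI) (auto simp: msum_def sum.cartesian_product')
  finally show ?thesis .
qed

lemma foldr_mult_carrier:
  "B \<in> carrier_mat N N \<Longrightarrow> (\<And>j. j \<in> set L \<Longrightarrow> F j \<in> carrier_mat N N) \<Longrightarrow>
    foldr (\<lambda>j M. F j * M) L B \<in> carrier_mat N N"
  by (induction L) auto

definition mprod :: "nat \<Rightarrow> complex mat list \<Rightarrow> complex mat" where
  "mprod N xs = foldr (*) xs (1\<^sub>m N)"

lemma mprod_Nil [simp]: "mprod N [] = 1\<^sub>m N"
  and mprod_Cons [simp]: "mprod N (x # xs) = x * mprod N xs"
  by (simp_all add: mprod_def)

lemma mprod_carrier [simp]: "set xs \<subseteq> carrier_mat N N \<Longrightarrow> mprod N xs \<in> carrier_mat N N"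
  by (induction xs) auto

lemma mprod_append:
  "set xs \<subseteq> carrier_mat N N \<Longrightarrow> set ys \<subseteq> carrier_mat N N \<Longrightarrow>
    mprod N (xs @ ys) = mprod N xs * mprod N ys"
proof (induction xs)
  case Nil
  then show ?case by (simp add: left_mult_one_mat[OF mprod_carrier])
next
  case (Cons x xs)
  then show ?case by (simp add: assoc_mult_mat[of x N N _ N _ N])
qed

lemma mprod_msum_distrib:
  assumes "distinct L" "finite A" "\<And>a. a \<in> A \<Longrightarrow> M a \<in> carrier_mat N N"
  shows "mprod N (map (\<lambda>r. msum N (\<lambda>a. c r a \<cdot>\<^sub>m M a) A) L) =
    msum N (\<lambda>f. (\<Prod>r\<in>set L. c r (f r)) \<cdot>\<^sub>m mprod N (map (\<lambda>r. M (f r)) L)) (PiE (set L) (\<lambda>_. A))"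
  using assms(1)
proof (induction L)
  case Nil
  then show ?case by (simp add: msum_insert)
next
  case (Cons r L)
  then have r: "r \<notin> set L" by simp
  let ?P = "\<lambda>g. mprod N (map (\<lambda>r. M (g r)) L)"
  have cP: "\<And>g. g \<in> PiE (set L) (\<lambda>_. A) \<Longrightarrow> ?P g \<in> carrier_mat N N"
    using assms(3) by (intro mprod_carrier) (auto simp: PiE_iff)
  have upd: "(\<Prod>r'\<in>insert r (set L). c r' ((g(r := a)) r')) = c r a * (\<Prod>r\<in>set L. c r (g r))"
    "mprod N (map (\<lambda>r'. M ((g(r := a)) r')) L) = ?P g" for g a
    using r by (auto simp: prod.insert intro!: prod.cong arg_cong[where f = "mprod N"])
  have "mprod N (map (\<lambda>r. msum N (\<lambda>a. c r a \<cdot>\<^sub>m M a) A) (r # L)) =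
     msum N (\<lambda>a. c r a \<cdot>\<^sub>m M a) A * msum N (\<lambda>g. (\<Prod>r\<in>set L. c r (g r)) \<cdot>\<^sub>m ?P g) (PiE (set L) (\<lambda>_. A))"
    using Cons by simp
  also have "\<dots> = msum N (\<lambda>a. (c r a \<cdot>\<^sub>m M a) * msum N (\<lambda>g. (\<Prod>r\<in>set L. c r (g r)) \<cdot>\<^sub>m ?P g)
      (PiE (set L) (\<lambda>_. A))) A"
    by (rule msum_mult_right) (use assms(2,3) in auto)
  also have "\<dots> = msum N (\<lambda>a. msum N (\<lambda>g. (c r a \<cdot>\<^sub>m M a) * ((\<Prod>r\<in>set L. c r (g r)) \<cdot>\<^sub>m ?P g))
      (PiE (set L) (\<lambda>_. A))) A"
    by (intro msum_cong msum_mult_left) (use assms(2,3) cP in \<open>auto simp: finite_PiE\<close>)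
  also have "\<dots> = msum N (\<lambda>a. msum N (\<lambda>g. (c r a * (\<Prod>r\<in>set L. c r (g r))) \<cdot>\<^sub>m (M a * ?P g))
      (PiE (set L) (\<lambda>_. A))) A"
    using assms(3) cP by (intro msum_cong) (simp add: mult_smult_distrib[of _ N N _ N]
        mult_smult_assoc_mat[of _ N N _ N] smult_smult_mat mult.commute)
  also have "\<dots> = msum N (\<lambda>f. (\<Prod>r\<in>set (r # L). c r (f r)) \<cdot>\<^sub>m mprod N (map (\<lambda>r. M (f r)) (r # L)))
      (PiE (set (r # L)) (\<lambda>_. A))"
    unfolding set_simps msum_PiE_insert[OF r] using upd by (simp add: fun_upd_same del: fun_upd_apply)
  finally show ?case .
qed

text \<open>One affine factor \<open>c (I + x A)\<close>, summed over \<open>x = \<plusminus>1\<close> with weight \<open>x\<close> (resp. \<open>1\<close>),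
 leaves \<open>2c A\<close> (resp. \<open>2c I\<close>); the next lemma iterates this over a list of factors.\<close>

lemma msum_sign_affine:
  assumes "A \<in> carrier_mat N N" "H \<in> carrier_mat N N"
  shows "msum N (\<lambda>x::int. (of_int (if j \<in> J then x else 1) * w) \<cdot>\<^sub>m ((c \<cdot>\<^sub>m (1\<^sub>m N + of_int x \<cdot>\<^sub>m A)) * H))
      {-1, 1} = (2 * c * w) \<cdot>\<^sub>m ((if j \<in> J then A else 1\<^sub>m N) * H)"
proof -
  have "(c \<cdot>\<^sub>m (1\<^sub>m N + of_int x \<cdot>\<^sub>m A)) * H = c \<cdot>\<^sub>m (H + of_int x \<cdot>\<^sub>m (A * H))" for x :: int
    using assms by (simp add: mult_smult_assoc_mat[of _ N N _ N] add_mult_distrib_mat[of _ N N _ _ N])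
  then show ?thesis
    by (simp only:) (rule eq_matI, use assms in \<open>auto simp: msum_insert algebra_simps\<close>)
qed

lemma msum_signs_foldr_affine:
  assumes "distinct L" "\<And>j. j \<in> set L \<Longrightarrow> A j \<in> carrier_mat N N" "B \<in> carrier_mat N N"
  shows "msum N (\<lambda>q. of_int (\<Prod>j\<in>set L \<inter> J. q j) \<cdot>\<^sub>m foldr (\<lambda>j M. (c \<cdot>\<^sub>m (1\<^sub>m N + of_int (q j) \<cdot>\<^sub>m A j)) * M) L B)
      (PiE (set L) (\<lambda>_. {-1, 1 :: int}))
    = ((2 * c) ^ length L) \<cdot>\<^sub>m foldr (\<lambda>j M. (if j \<in> J then A j else 1\<^sub>m N) * M) L B"
  using assms(1,2)
proof (induction L)
  case Nil
  then show ?case using assms(3) by (simp add: msum_insert)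
next
  case (Cons a L)
  then have a: "a \<notin> set L" by simp
  let ?Q = "PiE (set L) (\<lambda>_. {-1, 1 :: int})"
  let ?w = "\<lambda>g. of_int (\<Prod>j\<in>set L \<inter> J. g j) :: complex"
  let ?F = "\<lambda>g. foldr (\<lambda>j M. (c \<cdot>\<^sub>m (1\<^sub>m N + of_int (g j) \<cdot>\<^sub>m A j)) * M) L B"
  let ?H = "foldr (\<lambda>j M. (if j \<in> J then A j else 1\<^sub>m N) * M) L B"
  let ?K = "\<lambda>x::int. c \<cdot>\<^sub>m (1\<^sub>m N + of_int x \<cdot>\<^sub>m A a)"
  have cA: "A a \<in> carrier_mat N N" using Cons.prems by simp
  have cF: "?F g \<in> carrier_mat N N" for g
    using assms(3) Cons.prems by (intro foldr_mult_carrier) auto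
  have cH: "?H \<in> carrier_mat N N" using assms(3) Cons.prems by (intro foldr_mult_carrier) auto
  have split: "of_int (\<Prod>j\<in>insert a (set L) \<inter> J. (g(a := x)) j) \<cdot>\<^sub>m
      foldr (\<lambda>j M. (c \<cdot>\<^sub>m (1\<^sub>m N + of_int ((g(a := x)) j) \<cdot>\<^sub>m A j)) * M) (a # L) B
    = ?K x * (of_int (if a \<in> J then x else 1) \<cdot>\<^sub>m (?w g \<cdot>\<^sub>m ?F g))" for g x
  proof -
    have "(\<Prod>j\<in>insert a (set L) \<inter> J. (g(a := x)) j) = (if a \<in> J then x else 1) * (\<Prod>j\<in>set L \<inter> J. g j)"
      using a by (cases "a \<in> J") (auto simp: Int_insert_left prod.insert intro!: prod.cong)
    moreover have "foldr (\<lambda>j M. (c \<cdot>\<^sub>m (1\<^sub>m N + of_int ((g(a := x)) j) \<cdot>\<^sub>m A j)) * M) L B = ?F g"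
      using a by (intro foldr_cong) auto
    ultimately show ?thesis
      using cF cA by (simp add: mult_smult_distrib[of _ N N _ N] smult_smult_mat mult.commute)
  qed
  have IH: "msum N (\<lambda>g. ?w g \<cdot>\<^sub>m ?F g) ?Q = ((2 * c) ^ length L) \<cdot>\<^sub>m ?H"
    by (rule Cons.IH) (use Cons.prems in auto)
  have inner: "msum N (\<lambda>g. s \<cdot>\<^sub>m (?w g \<cdot>\<^sub>m ?F g)) ?Q = s \<cdot>\<^sub>m (((2 * c) ^ length L) \<cdot>\<^sub>m ?H)" for s
    unfolding IH[symmetric] using cF by (intro msum_smult) simp
  have "msum N (\<lambda>q. of_int (\<Prod>j\<in>set (a # L) \<inter> J. q j) \<cdot>\<^sub>m
      foldr (\<lambda>j M. (c \<cdot>\<^sub>m (1\<^sub>m N + of_int (q j) \<cdot>\<^sub>m A j)) * M) (a # L) B) (PiE (set (a # L)) (\<lambda>_. {-1, 1}))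
    = msum N (\<lambda>x. ?K x * msum N (\<lambda>g. of_int (if a \<in> J then x else 1) \<cdot>\<^sub>m (?w g \<cdot>\<^sub>m ?F g)) ?Q) {-1, 1}"
    unfolding set_simps(2) msum_PiE_insert[OF a] split
    using cA cF by (intro msum_cong msum_mult_left[symmetric]) (auto simp: finite_PiE)
  also have "\<dots> = msum N (\<lambda>x. (of_int (if a \<in> J then x else 1) * (2 * c) ^ length L) \<cdot>\<^sub>m (?K x * ?H)) {-1, 1}"
    unfolding inner using cA cH
    by (intro msum_cong) (simp add: mult_smult_distrib[of _ N N _ N] smult_smult_mat)
  also have "\<dots> = ((2 * c) ^ length (a # L)) \<cdot>\<^sub>m ((if a \<in> J then A a else 1\<^sub>m N) * ?H)"
    by (subst msum_sign_affine[OF cA cH]) (simp add: mult_ac)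
  finally show ?case by simp
qed

section \<open>Characters of the cube \<open>{\<plusminus>1}\<^sup>2\<^sup>n\<close>\<close>

definition sign_flip :: "nat set \<Rightarrow> nat \<Rightarrow> complex" where
  "sign_flip X a = (if a \<in> X then -1 else 1)"

lemma xS_eq_prod_sign_flip:
  assumes "even (card S)" "finite S" "finite X"
  shows "complex_of_int (xS X S) = (\<Prod>a\<in>S. sign_flip X a)"
proof -
  have "card (S \<inter> X) \<le> card X * card S"
    using card_mono[OF assms(3), of "S \<inter> X"] assms(1,2) by (cases "card S") auto
  then have "xS X S = (-1) ^ card (S \<inter> X)"
    using assms(1) by (auto simp: xS_def minus_one_power_iff even_diff_nat)
  moreover have "(\<Prod>a\<in>S. sign_flip X a) = (\<Prod>a\<in>S \<inter> X. -1)"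
    using prod.inter_restrict[OF assms(2), of "\<lambda>_. -1::complex" X] by (simp add: sign_flip_def if_distrib)
  ultimately show ?thesis by simp
qed

lemma even_fibres_iff_bij_betw:
  assumes fI: "finite I" and SI: "S \<subseteq> I" and fD: "finite D" and cD: "card D = card S" and fDI: "f ` D \<subseteq> I"
  shows "(\<forall>a\<in>I. even ((if a \<in> S then 1 else 0) + card {r\<in>D. f r = a})) \<longleftrightarrow> bij_betw f D S"
proof
  assume ev: "\<forall>a\<in>I. even ((if a \<in> S then 1 else 0) + card {r\<in>D. f r = a})"
  have "S \<subseteq> f ` D"
  proof
    fix a assume a: "a \<in> S"
    then have "odd (card {r\<in>D. f r = a})" using ev SI by force
    then have "card {r\<in>D. f r = a} \<noteq> 0" by presburger
    then show "a \<in> f ` D" by (metis (mono_tags, lifting) card.empty empty_Collect_eq image_eqI)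
  qed
  moreover have "card (f ` D) \<le> card S" using card_image_le[OF fD] cD by simp
  moreover have "finite S" using SI fI finite_subset by blast
  ultimately have eq: "f ` D = S"
    by (metis card_seteq fD finite_imageI)
  then have "inj_on f D" using cD fD by (simp add: eq_card_imp_inj_on)
  then show "bij_betw f D S" using eq by (simp add: bij_betw_def)
next
  assume b: "bij_betw f D S"
  show "\<forall>a\<in>I. even ((if a \<in> S then 1 else 0) + card {r\<in>D. f r = a})"
  proof
    fix a assume "a \<in> I"
    show "even ((if a \<in> S then 1 else 0) + card {r\<in>D. f r = a})"
    proof (cases "a \<in> S")
      case True
      then obtain r where r: "r \<in> D" "f r = a" using b by (auto simp: bij_betw_def)
      have "{r\<in>D. f r = a} = {r}" using b r by (auto simp: bij_betw_def inj_on_def)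
      then show ?thesis using True by simp
    next
      case False
      have e: "{r\<in>D. f r = a} = {}" using b False by (auto simp: bij_betw_def)
      have "card {r\<in>D. f r = a} = 0" by (simp only: e card.empty)
      then show ?thesis using False by simp
    qed
  qed
qed

lemma sum_Pow_prod_if:
  assumes "finite I"
  shows "(\<Sum>X\<in>Pow I. \<Prod>a\<in>I. if a \<in> X then e a else (1::complex)) = (\<Prod>a\<in>I. e a + 1)"
proof -
  have "(\<Prod>a\<in>I. e a + 1) = (\<Sum>X\<in>Pow I. (\<Prod>a\<in>X. e a) * (\<Prod>a\<in>I-X. 1))"
    using assms by (rule prod_add)
  also have "\<dots> = (\<Sum>X\<in>Pow I. \<Prod>a\<in>I. if a \<in> X then e a else (1::complex))"
  proof (rule sum.cong)
    fix X assume "X \<in> Pow I"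
    then have "I \<inter> X = X" by auto
    then show "(\<Prod>a\<in>X. e a) * (\<Prod>a\<in>I-X. 1) = (\<Prod>a\<in>I. if a \<in> X then e a else 1)"
      using prod.inter_restrict[OF assms, of e X] by simp
  qed simp
  finally show ?thesis by simp
qed

lemma prod_neg_one_power_plus_one:
  assumes "finite I"
  shows "(\<Prod>a\<in>I. (-1::complex)^(m a) + 1) = (if \<forall>a\<in>I. even (m a) then 2^card I else 0)"
proof (cases "\<forall>a\<in>I. even (m a)")
  case True
  then have "(\<Prod>a\<in>I. (-1::complex)^(m a) + 1) = (\<Prod>a\<in>I. 2)" by (intro prod.cong) auto
  then show ?thesis using True by simp
next
  case False
  then obtain a where "a \<in> I" "odd (m a)" by auto
  then have "(-1::complex)^(m a) + 1 = 0" by simp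
  then show ?thesis using False \<open>a \<in> I\<close> assms by (simp add: prod_zero_iff) blast
qed

text \<open>Orthogonality of characters: the sum over \<open>X\<close> vanishes unless every point is hit an even
 number of times by \<open>S\<close> and \<open>f\<close> together, which for \<open>card D = card S\<close> means that \<open>f\<close> is a
 bijection onto \<open>S\<close>.\<close>

lemma sum_Pow_sign_flip_prod:
  assumes fI: "finite I" and SI: "S \<subseteq> I" and fD: "finite D" and cD: "card D = card S" and fDI: "f ` D \<subseteq> I"
  shows "(\<Sum>X\<in>Pow I. (\<Prod>a\<in>S. sign_flip X a) * (\<Prod>r\<in>D. sign_flip X (f r))) = (if bij_betw f D S then 2^card I else 0)"
proof -
  define m where "m a = (if a \<in> S then 1 else 0) + card {r\<in>D. f r = a}" for a
  have key: "(\<Prod>a\<in>S. sign_flip X a) * (\<Prod>r\<in>D. sign_flip X (f r)) = (\<Prod>a\<in>I. if a \<in> X then (-1)^(m a) else 1)" for X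
  proof -
    have fibres: "(\<Prod>r\<in>D. sign_flip X (f r)) = (\<Prod>a\<in>I. sign_flip X a ^ card {r\<in>D. f r = a})"
    proof -
      have "(\<Prod>r\<in>D. sign_flip X (f r)) = (\<Prod>a\<in>I. \<Prod>r\<in>{r. r \<in> D \<and> f r = a}. sign_flip X (f r))"
        using prod.group[OF fD fI fDI, of "\<lambda>r. sign_flip X (f r)"] by simp
      also have "\<dots> = (\<Prod>a\<in>I. sign_flip X a ^ card {r\<in>D. f r = a})"
        by (intro prod.cong refl) simp
      finally show ?thesis .
    qed
    have on_S: "(\<Prod>a\<in>S. sign_flip X a) = (\<Prod>a\<in>I. sign_flip X a ^ (if a \<in> S then 1 else 0))"
    proof -
      have "I \<inter> S = S" using SI by auto
      then have "(\<Prod>a\<in>S. sign_flip X a) = (\<Prod>a\<in>I. if a \<in> S then sign_flip X a else 1)"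
        using prod.inter_restrict[OF fI, of "sign_flip X" S] by simp
      also have "\<dots> = (\<Prod>a\<in>I. sign_flip X a ^ (if a \<in> S then 1 else 0))" by (intro prod.cong) auto
      finally show ?thesis .
    qed
    have "(\<Prod>a\<in>S. sign_flip X a) * (\<Prod>r\<in>D. sign_flip X (f r)) = (\<Prod>a\<in>I. sign_flip X a ^ m a)"
      unfolding fibres on_S m_def by (simp add: prod.distrib power_add)
    also have "\<dots> = (\<Prod>a\<in>I. if a \<in> X then (-1)^(m a) else 1)"
      by (intro prod.cong) (auto simp: sign_flip_def)
    finally show ?thesis .
  qed
  have "(\<Sum>X\<in>Pow I. (\<Prod>a\<in>S. sign_flip X a) * (\<Prod>r\<in>D. sign_flip X (f r))) = (\<Prod>a\<in>I. (-1)^(m a) + 1)"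
    unfolding key by (rule sum_Pow_prod_if[OF fI])
  also have "\<dots> = (if \<forall>a\<in>I. even (m a) then 2^card I else 0)" by (rule prod_neg_one_power_plus_one[OF fI])
  also have "(\<forall>a\<in>I. even (m a)) \<longleftrightarrow> bij_betw f D S"
    unfolding m_def by (rule even_fibres_iff_bij_betw[OF assms])
  finally show ?thesis .
qed

section \<open>Products of Majorana operators\<close>

lemma add_eq_zero_mat_imp_neg:
  assumes "A \<in> carrier_mat N N" "B \<in> carrier_mat N N" "A + B = 0\<^sub>m N N"
  shows "A = (-1 :: 'a :: ring_1) \<cdot>\<^sub>m B"
proof (rule eq_matI)
  fix i j assume ij: "i < dim_row ((-1 :: 'a) \<cdot>\<^sub>m B)" "j < dim_col ((-1 :: 'a) \<cdot>\<^sub>m B)"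
  have "(A + B) $$ (i, j) = 0" using assms(2,3) ij by simp
  then show "A $$ (i, j) = ((-1 :: 'a) \<cdot>\<^sub>m B) $$ (i, j)"
    using assms(1,2) ij by (simp add: eq_neg_iff_add_eq_0)
qed (use assms in auto)

lemma add_self_eq_two_smult_imp:
  assumes "A \<in> carrier_mat N N" "B \<in> carrier_mat N N" "A + A = (2 :: 'a :: field_char_0) \<cdot>\<^sub>m B"
  shows "A = B"
proof (rule eq_matI)
  fix i j assume ij: "i < dim_row B" "j < dim_col B"
  have "(A + A) $$ (i, j) = (2 \<cdot>\<^sub>m B) $$ (i, j)" using assms(3) by simp
  then show "A $$ (i, j) = B $$ (i, j)" using assms(1,2) ij by simp
qed (use assms in auto)

lemma list_update_swap_append:
  "(A @ x # B @ y # C)[length A := y', length A + Suc (length B) := x'] = A @ y' # B @ x' # C"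
  by (simp add: list_update_append)

lemma take_nth_drop_two:
  assumes "i < j" "j < length w"
  shows "w = take i w @ w!i # take (j - Suc i) (drop (Suc i) w) @ w!j # drop (Suc j) w"
proof -
  let ?D = "drop (Suc i) w"
  have w1: "w = take i w @ w!i # ?D" using assms by (intro id_take_nth_drop) simp
  have l: "j - Suc i < length ?D" using assms by simp
  have d: "?D = take (j - Suc i) ?D @ ?D!(j - Suc i) # drop (Suc (j - Suc i)) ?D"
    by (rule id_take_nth_drop[OF l])
  have "?D!(j - Suc i) = w!j" using assms by simp
  moreover have "drop (Suc (j - Suc i)) ?D = drop (Suc j) w" using assms
    by (simp add: Suc_diff_Suc)
  ultimately have "?D = take (j - Suc i) ?D @ w!j # drop (Suc j) w" using d by simp
  then show ?thesis using w1 by simp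
qed

abbreviation index_pairs :: "nat \<Rightarrow> (nat \<times> nat) set" where
  "index_pairs m \<equiv> {p \<in> {1..m} \<times> {1..m}. fst p < snd p}"

lemma SS_two_eq_image_index_pairs: "SS n 2 = (\<lambda>p. {fst p, snd p}) ` index_pairs (2*n)"
proof
  show "SS n 2 \<subseteq> (\<lambda>p. {fst p, snd p}) ` index_pairs (2*n)"
  proof
    fix S assume "S \<in> SS n 2"
    then obtain x y where S: "S = {x, y}" "x \<noteq> y" "S \<subseteq> {1..2*n}"
      unfolding SS_def by (auto simp: card_2_iff)
    then consider "x < y" | "y < x" by linarith
    then show "S \<in> (\<lambda>p. {fst p, snd p}) ` index_pairs (2*n)"
      using S by cases (auto intro: image_eqI[of _ _ "(x, y)"] image_eqI[of _ _ "(y, x)"])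
  qed
qed (auto simp: SS_def)

lemma map_nth_transpose_comp:
  assumes "inj_on p {0..<m}" "ia < m" "p ia = a" "ib < m" "p ib = b" "ia \<noteq> ib"
  shows "map (\<lambda>i. ss ! (Transposition.transpose a b \<circ> p) i) [0..<m] =
    (map (\<lambda>i. ss ! p i) [0..<m])[ia := ss ! p ib, ib := ss ! p ia]"
proof (rule nth_equalityI)
  fix k assume "k < length (map (\<lambda>i. ss ! (Transposition.transpose a b \<circ> p) i) [0..<m])"
  then have k: "k < m" by simp
  then have "p k = a \<longleftrightarrow> k = ia" "p k = b \<longleftrightarrow> k = ib"
    using assms by (auto simp: inj_on_def)
  with k assms show "map (\<lambda>i. ss ! (Transposition.transpose a b \<circ> p) i) [0..<m] ! k =
      (map (\<lambda>i. ss ! p i) [0..<m])[ia := ss ! p ib, ib := ss ! p ia] ! k"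
    by (auto simp: nth_list_update transpose_def)
qed simp

locale majorana_family =
  fixes n :: nat and \<gamma> :: "nat \<Rightarrow> complex mat"
  assumes majorana: "majorana_ops n \<gamma>"
begin

abbreviation "N \<equiv> maj_dim n"

lemmas square_mat_simps = mult_smult_distrib[of _ N N _ N] mult_smult_assoc_mat[of _ N N _ N]
  assoc_mult_mat[of _ N N _ N _ N] smult_smult_mat

lemma gamma_carrier [simp]: "j \<in> {1..2*n} \<Longrightarrow> \<gamma> j \<in> carrier_mat N N"
  using majorana by (auto simp: majorana_ops_def)

lemma mprod_gamma_carrier [simp]: "set w \<subseteq> {1..2*n} \<Longrightarrow> mprod N (map \<gamma> w) \<in> carrier_mat N N"
  by (rule mprod_carrier) auto

lemma mprod_gamma_append:
  "set xs \<subseteq> {1..2*n} \<Longrightarrow> set ys \<subseteq> {1..2*n} \<Longrightarrow>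
    mprod N (map \<gamma> (xs @ ys)) = mprod N (map \<gamma> xs) * mprod N (map \<gamma> ys)"
  unfolding map_append by (rule mprod_append) auto

lemma gamma_anticommute:
  assumes "j \<in> {1..2*n}" "j' \<in> {1..2*n}" "j \<noteq> j'"
  shows "\<gamma> j * \<gamma> j' = (-1) \<cdot>\<^sub>m (\<gamma> j' * \<gamma> j)"
proof (rule add_eq_zero_mat_imp_neg)
  show "\<gamma> j * \<gamma> j' + \<gamma> j' * \<gamma> j = 0\<^sub>m N N"
    using majorana assms by (auto simp: majorana_ops_def)
qed (use assms in auto)

lemma gamma_square:
  assumes "j \<in> {1..2*n}"
  shows "\<gamma> j * \<gamma> j = 1\<^sub>m N"
proof (rule add_self_eq_two_smult_imp)
  show "\<gamma> j * \<gamma> j + \<gamma> j * \<gamma> j = 2 \<cdot>\<^sub>m 1\<^sub>m N"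
    using majorana assms by (auto simp: majorana_ops_def)
qed (use assms in auto)

lemma gamma_mprod_commute:
  assumes "x \<in> {1..2*n}" "set B \<subseteq> {1..2*n}" "x \<notin> set B"
  shows "\<gamma> x * mprod N (map \<gamma> B) = ((-1)^length B) \<cdot>\<^sub>m (mprod N (map \<gamma> B) * \<gamma> x)"
  using assms(2,3)
proof (induction B)
  case Nil
  have "\<gamma> x \<in> carrier_mat N N" using assms(1) by simp
  then show ?case by (simp add: left_mult_one_mat[of _ N N] right_mult_one_mat[of _ N N])
next
  case (Cons b B)
  have cb: "\<gamma> b \<in> carrier_mat N N" and cx: "\<gamma> x \<in> carrier_mat N N"
    and cB: "mprod N (map \<gamma> B) \<in> carrier_mat N N" using Cons.prems assms(1) by auto
  have xb: "x \<noteq> b" "b \<in> {1..2*n}" using Cons.prems by auto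
  have "\<gamma> x * mprod N (map \<gamma> (b # B)) = (\<gamma> x * \<gamma> b) * mprod N (map \<gamma> B)"
    using cb cx cB by (simp add: assoc_mult_mat[of _ N N _ N _ N])
  also have "\<dots> = ((-1) \<cdot>\<^sub>m (\<gamma> b * \<gamma> x)) * mprod N (map \<gamma> B)"
    using gamma_anticommute[OF assms(1) xb(2) xb(1)] by simp
  also have "\<dots> = (-1) \<cdot>\<^sub>m (\<gamma> b * (\<gamma> x * mprod N (map \<gamma> B)))"
    using cb cx cB by (simp add: mult_smult_assoc_mat[of _ N N _ N] assoc_mult_mat[of _ N N _ N _ N])
  also have "\<gamma> x * mprod N (map \<gamma> B) = ((-1)^length B) \<cdot>\<^sub>m (mprod N (map \<gamma> B) * \<gamma> x)"
    using Cons by auto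
  also have "(-1) \<cdot>\<^sub>m (\<gamma> b * (((-1)^length B) \<cdot>\<^sub>m (mprod N (map \<gamma> B) * \<gamma> x))) =
     ((-1)^length (b#B)) \<cdot>\<^sub>m (mprod N (map \<gamma> (b#B)) * \<gamma> x)"
    using cb cx cB by (simp add: square_mat_simps)
  finally show ?case .
qed

lemma gamma_mprod_gamma_swap:
  assumes "x \<in> {1..2*n}" "y \<in> {1..2*n}" "set B \<subseteq> {1..2*n}" "x \<notin> set B" "y \<notin> set B" "x \<noteq> y"
  shows "\<gamma> x * mprod N (map \<gamma> B) * \<gamma> y = (-1) \<cdot>\<^sub>m (\<gamma> y * mprod N (map \<gamma> B) * \<gamma> x)"
proof -
  let ?B = "mprod N (map \<gamma> B)" and ?s = "(-1 :: complex) ^ length B"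
  have c: "?B \<in> carrier_mat N N" "\<gamma> x \<in> carrier_mat N N" "\<gamma> y \<in> carrier_mat N N"
    using assms by auto
  have y: "?B * \<gamma> y = ?s \<cdot>\<^sub>m (\<gamma> y * ?B)"
    using gamma_mprod_commute[OF assms(2,3,5)] c by (simp add: smult_smult_mat power_mult_distrib[symmetric])
  have "\<gamma> x * ?B * \<gamma> y = ?s \<cdot>\<^sub>m (?B * (\<gamma> x * \<gamma> y))"
    using gamma_mprod_commute[OF assms(1,3,4)] c by (simp add: square_mat_simps)
  also have "\<dots> = (- ?s) \<cdot>\<^sub>m (?B * \<gamma> y * \<gamma> x)"
    using gamma_anticommute[OF assms(1,2,6)] c by (simp add: square_mat_simps)
  also have "\<dots> = (- (?s * ?s)) \<cdot>\<^sub>m (\<gamma> y * ?B * \<gamma> x)"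
    unfolding y using c by (simp add: square_mat_simps)
  finally show ?thesis by (simp add: power_mult_distrib[symmetric])
qed

lemma mprod_gamma_swap:
  assumes "distinct (A @ x # B @ y # C)" "set (A @ x # B @ y # C) \<subseteq> {1..2*n}"
  shows "mprod N (map \<gamma> (A @ y # B @ x # C)) = (-1) \<cdot>\<^sub>m mprod N (map \<gamma> (A @ x # B @ y # C))"
proof -
  have split: "mprod N (map \<gamma> (A @ u # B @ v # C)) =
      mprod N (map \<gamma> A) * (\<gamma> u * mprod N (map \<gamma> B) * \<gamma> v) * mprod N (map \<gamma> C)"
    if "u \<in> {1..2*n}" "v \<in> {1..2*n}" for u v
  proof -
    have "mprod N (map \<gamma> (A @ u # B @ v # C)) =
        mprod N (map \<gamma> A) * (\<gamma> u * (mprod N (map \<gamma> B) * (\<gamma> v * mprod N (map \<gamma> C))))"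
      using assms that by (simp add: mprod_gamma_append del: map_append)
    then show ?thesis using assms that by (simp add: square_mat_simps)
  qed
  have xy: "x \<in> {1..2*n}" "y \<in> {1..2*n}" using assms(2) by auto
  have B: "set B \<subseteq> {1..2*n}" "x \<notin> set B" "y \<notin> set B" "x \<noteq> y" using assms by auto
  have c: "mprod N (map \<gamma> A) \<in> carrier_mat N N" "mprod N (map \<gamma> B) \<in> carrier_mat N N"
    "mprod N (map \<gamma> C) \<in> carrier_mat N N" using assms(2) by auto
  show ?thesis
    unfolding split[OF xy] split[OF xy(2,1)] gamma_mprod_gamma_swap[OF xy B] using c xy
    by (simp add: square_mat_simps)
qed

lemma mprod_gamma_swap_less:
  assumes "distinct w" "set w \<subseteq> {1..2*n}" "i < j" "j < length w"
  shows "mprod N (map \<gamma> (w[i := w!j, j := w!i])) = (-1) \<cdot>\<^sub>m mprod N (map \<gamma> w)"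
proof -
  define A where "A = take i w"
  define B where "B = take (j - Suc i) (drop (Suc i) w)"
  define C where "C = drop (Suc j) w"
  have w: "w = A @ w!i # B @ w!j # C" unfolding A_def B_def C_def using take_nth_drop_two[OF assms(3,4)] .
  have lA: "length A = i" using assms unfolding A_def by simp
  have lB: "length A + Suc (length B) = j" using assms unfolding A_def B_def by simp
  have upd: "w[i := w!j, j := w!i] = A @ w!j # B @ w!i # C"
    by (subst (1) w) (metis lA lB list_update_swap_append)
  have "distinct (A @ w!i # B @ w!j # C)" "set (A @ w!i # B @ w!j # C) \<subseteq> {1..2*n}"
    using assms(1,2) unfolding w[symmetric] by auto
  then have "mprod N (map \<gamma> (A @ w!j # B @ w!i # C)) = (-1) \<cdot>\<^sub>m mprod N (map \<gamma> (A @ w!i # B @ w!j # C))"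
    by (rule mprod_gamma_swap)
  then show ?thesis unfolding upd w[symmetric] .
qed

lemma mprod_gamma_list_update_swap:
  assumes "distinct w" "set w \<subseteq> {1..2*n}" "i < length w" "j < length w" "i \<noteq> j"
  shows "mprod N (map \<gamma> (w[i := w!j, j := w!i])) = (-1) \<cdot>\<^sub>m mprod N (map \<gamma> w)"
proof (cases "i < j")
  case True then show ?thesis using mprod_gamma_swap_less assms by blast
next
  case False
  then have "j < i" using assms by simp
  moreover have "w[i := w!j, j := w!i] = w[j := w!i, i := w!j]" using assms by (simp add: list_update_swap)
  ultimately show ?thesis using mprod_gamma_swap_less[of w j i] assms by simp
qed

lemma mprod_gamma_permute:
  assumes "distinct ss" "set ss \<subseteq> {1..2*n}" "length ss = m" "p permutes {0..<m}"
  shows "mprod N (map \<gamma> (map (\<lambda>i. ss!(p i)) [0..<m])) = of_int (sign p) \<cdot>\<^sub>m mprod N (map \<gamma> ss)"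
  using assms(4) finite_atLeastLessThan
proof (induction p rule: permutes_induct)
  case id
  have "map (\<lambda>i. ss!(id i)) [0..<m] = ss" using assms(3) map_nth[of ss] by (simp add: id_def)
  then show ?case by simp
next
  case (swap a b p)
  let ?w = "map (\<lambda>i. ss!(p i)) [0..<m]"
  define ia where "ia = inv_into UNIV p a"
  define ib where "ib = inv_into UNIV p b"
  have ip: "inv_into UNIV p permutes {0..<m}" using swap.hyps(4) by (rule permutes_inv)
  have ia: "ia < m" "p ia = a" using swap.hyps(1) ip swap.hyps(4) unfolding ia_def
    by (auto simp: permutes_inverses permutes_in_image)
  have ib: "ib < m" "p ib = b" using swap.hyps(2) ip swap.hyps(4) unfolding ib_def
    by (auto simp: permutes_inverses permutes_in_image)
  have iab: "ia \<noteq> ib" using ia ib swap.hyps(3) by auto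
  have injp: "inj_on p {0..<m}" using swap.hyps(4) by (meson permutes_inj_on)
  have pm: "\<And>k. k < m \<Longrightarrow> p k < m" using swap.hyps(4) by (simp add: permutes_in_image)
  have distinct_w: "distinct ?w"
    using assms(1,3) injp pm by (auto simp: distinct_map inj_on_def nth_eq_iff_index_eq)
  have set_w: "set ?w \<subseteq> {1..2*n}" using assms(2,3) pm by auto
  have swap_w: "map (\<lambda>i. ss!((Transposition.transpose a b \<circ> p) i)) [0..<m] = ?w[ia := ?w!ib, ib := ?w!ia]"
    using map_nth_transpose_comp[OF injp ia ib iab] ia ib by simp
  have "mprod N (map \<gamma> (map (\<lambda>i. ss!((Transposition.transpose a b \<circ> p) i)) [0..<m])) = (-1) \<cdot>\<^sub>m mprod N (map \<gamma> ?w)"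
    unfolding swap_w by (rule mprod_gamma_list_update_swap[OF distinct_w set_w]) (use ia ib iab in auto)
  also have "\<dots> = (-1) \<cdot>\<^sub>m (of_int (sign p) \<cdot>\<^sub>m mprod N (map \<gamma> ss))" using swap.IH by simp
  also have "sign (Transposition.transpose a b \<circ> p) = - sign p"
  proof -
    have "permutation p" using swap.hyps(4) finite_atLeastLessThan permutation_permutes by blast
    then have "sign (Transposition.transpose a b \<circ> p) = sign (Transposition.transpose a b) * sign p"
      by (simp add: sign_compose permutation_swap_id)
    then show ?thesis using swap.hyps(3) by (simp add: sign_swap_id)
  qed
  ultimately show ?case by (simp add: smult_smult_mat comp_def)
qed

lemma gammaS_eq_mprod:
  "gammaS n \<gamma> S = (\<i> ^ (card S choose 2)) \<cdot>\<^sub>m mprod N (map \<gamma> (sorted_list_of_set S))"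
  by (simp add: gammaS_def mprod_def foldr_map comp_def)

lemma gammaS_carrier: "S \<subseteq> {1..2*n} \<Longrightarrow> finite S \<Longrightarrow> gammaS n \<gamma> S \<in> carrier_mat N N"
  unfolding gammaS_eq_mprod by simp

text \<open>The diagonal terms are scalars since \<open>\<gamma> a * \<gamma> a = I\<close>, and the terms \<open>(a, b)\<close> and \<open>(b, a)\<close>
 combine by anticommutation.\<close>

lemma msum_gamma_mult_msum_gamma:
  "msum N (\<lambda>a. c a \<cdot>\<^sub>m \<gamma> a) {1..2*n} * msum N (\<lambda>b. d b \<cdot>\<^sub>m \<gamma> b) {1..2*n} =
    (\<Sum>a\<in>{1..2*n}. c a * d a) \<cdot>\<^sub>m 1\<^sub>m N +
    msum N (\<lambda>p. (c (fst p) * d (snd p) - c (snd p) * d (fst p)) \<cdot>\<^sub>m (\<gamma> (fst p) * \<gamma> (snd p))) (index_pairs (2*n))"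
proof -
  let ?I = "{1..2*n}"
  define F where "F p = (c (fst p) * d (snd p)) \<cdot>\<^sub>m (\<gamma> (fst p) * \<gamma> (snd p))" for p
  have "msum N (\<lambda>a. c a \<cdot>\<^sub>m \<gamma> a) ?I * msum N (\<lambda>b. d b \<cdot>\<^sub>m \<gamma> b) ?I =
      msum N (\<lambda>a. (c a \<cdot>\<^sub>m \<gamma> a) * msum N (\<lambda>b. d b \<cdot>\<^sub>m \<gamma> b) ?I) ?I"
    by (rule msum_mult_right) auto
  also have "\<dots> = msum N (\<lambda>a. msum N (\<lambda>b. (c a \<cdot>\<^sub>m \<gamma> a) * (d b \<cdot>\<^sub>m \<gamma> b)) ?I) ?I"
    by (intro msum_cong msum_mult_left) auto
  also have "\<dots> = msum N (\<lambda>a. msum N (\<lambda>b. F (a, b)) ?I) ?I"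
    by (intro msum_cong) (simp add: F_def square_mat_simps mult.commute)
  also have "\<dots> = msum N F (?I \<times> ?I)" by (simp add: msum_Sigma)
  also have "?I \<times> ?I = (\<lambda>a. (a, a)) ` ?I \<union> (index_pairs (2*n) \<union> prod.swap ` index_pairs (2*n))"
    by (auto simp: image_iff)
  also have "msum N F \<dots> = msum N F ((\<lambda>a. (a, a)) ` ?I) + (msum N F (index_pairs (2*n)) + msum N F (prod.swap ` index_pairs (2*n)))"
    by (subst msum_Un_disjoint, auto)+
  also have "msum N F ((\<lambda>a. (a, a)) ` ?I) = (\<Sum>a\<in>?I. c a * d a) \<cdot>\<^sub>m 1\<^sub>m N"
  proof -
    have "msum N F ((\<lambda>a. (a, a)) ` ?I) = msum N (\<lambda>a. (c a * d a) \<cdot>\<^sub>m 1\<^sub>m N) ?I"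
      by (subst msum_reindex) (auto simp: inj_on_def F_def gamma_square intro!: msum_cong)
    then show ?thesis by (simp add: msum_smult_const)
  qed
  also have "msum N F (index_pairs (2*n)) + msum N F (prod.swap ` index_pairs (2*n)) =
      msum N (\<lambda>p. (c (fst p) * d (snd p) - c (snd p) * d (fst p)) \<cdot>\<^sub>m (\<gamma> (fst p) * \<gamma> (snd p))) (index_pairs (2*n))"
  proof -
    have "F (prod.swap p) = (- (c (snd p) * d (fst p))) \<cdot>\<^sub>m (\<gamma> (fst p) * \<gamma> (snd p))" if "p \<in> index_pairs (2*n)" for p
      using that gamma_anticommute[of "snd p" "fst p"] by (auto simp: F_def smult_smult_mat)
    then have "msum N F (prod.swap ` index_pairs (2*n)) =
        msum N (\<lambda>p. (- (c (snd p) * d (fst p))) \<cdot>\<^sub>m (\<gamma> (fst p) * \<gamma> (snd p))) (index_pairs (2*n))"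
      by (subst msum_reindex) (auto intro!: msum_cong)
    moreover have "msum N F (index_pairs (2*n)) +
        msum N (\<lambda>p. (- (c (snd p) * d (fst p))) \<cdot>\<^sub>m (\<gamma> (fst p) * \<gamma> (snd p))) (index_pairs (2*n)) =
        msum N (\<lambda>p. F p + (- (c (snd p) * d (fst p))) \<cdot>\<^sub>m (\<gamma> (fst p) * \<gamma> (snd p))) (index_pairs (2*n))"
      by (rule msum_add[symmetric]) (auto simp: F_def)
    moreover have "\<dots> = msum N (\<lambda>p. (c (fst p) * d (snd p) - c (snd p) * d (fst p)) \<cdot>\<^sub>m
        (\<gamma> (fst p) * \<gamma> (snd p))) (index_pairs (2*n))"
    proof (rule msum_cong)
      fix p assume "p \<in> index_pairs (2*n)"
      then have "\<gamma> (fst p) * \<gamma> (snd p) \<in> carrier_mat N N" by auto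
      from add_smult_distrib_right_mat[OF this, symmetric] show "F p + (- (c (snd p) * d (fst p))) \<cdot>\<^sub>m
          (\<gamma> (fst p) * \<gamma> (snd p)) = (c (fst p) * d (snd p) - c (snd p) * d (fst p)) \<cdot>\<^sub>m (\<gamma> (fst p) * \<gamma> (snd p))"
        by (simp add: F_def)
    qed
    ultimately show ?thesis by simp
  qed
  finally show ?thesis .
qed
end

section \<open>The rotated modes and the pair operators\<close>

lemma sorted_list_of_set_eqI:
  "finite A \<Longrightarrow> sorted xs \<Longrightarrow> distinct xs \<Longrightarrow> set xs = A \<Longrightarrow> sorted_list_of_set A = xs"
  by (metis sorted_distinct_set_unique sorted_sorted_list_of_set distinct_sorted_list_of_set
      set_sorted_list_of_set)

lemma sorted_list_of_set_doubleton: "a < b \<Longrightarrow> sorted_list_of_set {a, b} = [a, b :: nat]"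
  by (rule sorted_list_of_set_eqI) auto

lemma sorted_list_of_set_pairD: "1 \<le> j \<Longrightarrow> sorted_list_of_set (pairD j) = [2*j-1, 2*j]"
  unfolding pairD_def by (rule sorted_list_of_set_doubleton) simp

lemma det_2x2:
  assumes "A \<in> carrier_mat 2 2"
  shows "det A = A $$ (0,0) * A $$ (1,1) - A $$ (0,1) * A $$ (1,0)"
proof -
  have "{0..<2::nat} = {0, 1}" by auto
  then have P: "{p. p permutes {0..<2::nat}} = {id, Transposition.transpose 0 1}"
    by (auto simp: permutes_doubleton_iff)
  have ne: "id \<noteq> Transposition.transpose (0::nat) 1" by (metis id_apply transpose_apply_first zero_neq_one)
  have s: "sign (Transposition.transpose (0::nat) 1) = -1" by (simp add: sign_swap_id)
  have pr: "\<And>f::nat \<Rightarrow> 'a. (\<Prod>i = 0..<2. f i) = f 0 * f 1" by (simp add: numeral_2_eq_2)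
  have "det A = (\<Sum>p\<in>{id, Transposition.transpose 0 1}. signof p * (\<Prod>i = 0..<2. A $$ (i, p i)))"
    unfolding det_def'[OF assms] P ..
  also have "\<dots> = signof id * (\<Prod>i = 0..<2. A $$ (i, id i)) +
      signof (Transposition.transpose (0::nat) 1) * (\<Prod>i = 0..<2. A $$ (i, Transposition.transpose 0 1 i))"
    by (subst sum.insert) (use ne in auto)
  also have "\<dots> = A $$ (0,0) * A $$ (1,1) - A $$ (0,1) * A $$ (1,0)"
    unfolding pr s by (simp add: sign_id)
  finally show ?thesis .
qed


lemma det_submat_pairD:
  assumes "1 \<le> j" "a < b"
  shows "det (submat Ot (pairD j) {a, b}) =
    Ot $$ (2*j-2, a-1) * Ot $$ (2*j-1, b-1) - Ot $$ (2*j-2, b-1) * Ot $$ (2*j-1, a-1)"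
proof -
  have "card (pairD j) = 2" "card {a, b} = 2" using assms by (auto simp: pairD_def)
  then have "submat Ot (pairD j) {a, b} = mat 2 2 (\<lambda>(p, q). Ot $$ ([2*j-1, 2*j] ! p - 1, [a, b] ! q - 1))"
    by (simp only: submat_def Let_def sorted_list_of_set_pairD[OF assms(1)] sorted_list_of_set_doubleton[OF assms(2)])
  then show ?thesis by (simp add: det_2x2 numeral_2_eq_2)
qed

context majorana_family
begin

lemma gammaS_doubleton:
  "a < b \<Longrightarrow> 1 \<le> a \<Longrightarrow> b \<le> 2*n \<Longrightarrow> gammaS n \<gamma> {a, b} = \<i> \<cdot>\<^sub>m (\<gamma> a * \<gamma> b)"
proof -
  assume "a < b" "1 \<le> a" "b \<le> 2*n"
  moreover have "card {a, b} choose 2 = 1" using \<open>a < b\<close> by (simp add: numeral_2_eq_2)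
  ultimately show ?thesis
    by (simp add: gammaS_eq_mprod sorted_list_of_set_doubleton right_mult_one_mat[of _ N N])
qed

end

locale majorana_rotation = majorana_family +
  fixes Ot :: "real mat"
  assumes orthogonal: "Ot \<in> orth_group (2*n)"
begin

definition mode_coeff :: "nat set \<Rightarrow> nat \<Rightarrow> nat \<Rightarrow> complex" where
  "mode_coeff X r a = complex_of_real (Ot $$ (r-1, a-1)) * sign_flip X a"

definition mode :: "nat set \<Rightarrow> nat \<Rightarrow> complex mat" where
  "mode X r = msum N (\<lambda>a. mode_coeff X r a \<cdot>\<^sub>m \<gamma> a) {1..2*n}"

lemma mode_carrier [simp]: "mode X r \<in> carrier_mat N N"
  by (simp add: mode_def)

lemma orthogonal_rows:
  assumes "r1 \<in> {1..2*n}" "r2 \<in> {1..2*n}" "r1 \<noteq> r2"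
  shows "(\<Sum>a\<in>{1..2*n}. Ot $$ (r1-1, a-1) * Ot $$ (r2-1, a-1)) = 0"
proof -
  have O: "Ot \<in> carrier_mat (2*n) (2*n)" "Ot * transpose_mat Ot = 1\<^sub>m (2*n)"
    using orthogonal by (auto simp: orth_group_def)
  have i: "r1 - 1 < 2*n" "r2 - 1 < 2*n" "r1 - 1 \<noteq> r2 - 1" using assms by auto
  have "(\<Sum>a\<in>{1..2*n}. Ot $$ (r1-1, a-1) * Ot $$ (r2-1, a-1)) = (\<Sum>l<2*n. Ot $$ (r1-1, l) * Ot $$ (r2-1, l))"
    by (rule sum.reindex_bij_witness[of _ Suc "\<lambda>a. a - 1"]) auto
  also have "\<dots> = (Ot * transpose_mat Ot) $$ (r1-1, r2-1)"
    using O(1) i by (simp add: scalar_prod_def lessThan_atLeast0)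
  finally show ?thesis using O(2) i by simp
qed

text \<open>The scalar part of the product vanishes because distinct rows of \<open>O\<close> are orthogonal.\<close>

lemma mode_mult_mode:
  assumes "r1 \<in> {1..2*n}" "r2 \<in> {1..2*n}" "r1 \<noteq> r2"
  shows "mode X r1 * mode X r2 = msum N (\<lambda>p. (mode_coeff X r1 (fst p) * mode_coeff X r2 (snd p) -
      mode_coeff X r1 (snd p) * mode_coeff X r2 (fst p)) \<cdot>\<^sub>m (\<gamma> (fst p) * \<gamma> (snd p))) (index_pairs (2*n))"
proof -
  have "(\<Sum>a\<in>{1..2*n}. mode_coeff X r1 a * mode_coeff X r2 a) =
      complex_of_real (\<Sum>a\<in>{1..2*n}. Ot $$ (r1-1, a-1) * Ot $$ (r2-1, a-1))"
    by (auto simp: mode_coeff_def sign_flip_def intro!: sum.cong)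
  also have "\<dots> = 0"
    using orthogonal_rows[OF assms] by simp
  finally show ?thesis
    unfolding mode_def msum_gamma_mult_msum_gamma by (simp add: zero_smult_mat[of _ N N])
qed

definition pair_op :: "nat set \<Rightarrow> nat \<Rightarrow> complex mat" where
  "pair_op X j = \<i> \<cdot>\<^sub>m (mode X (2*j-1) * mode X (2*j))"

lemma pair_op_carrier [simp]: "pair_op X j \<in> carrier_mat N N"
  by (simp add: pair_op_def)

lemma G_R_eq_pair_op:
  assumes j: "j \<in> {1..n}" and X: "finite X"
  shows "G_R n \<gamma> Ot (pairD j) q X = (1 / 2 ^ (2*n+1)) \<cdot>\<^sub>m (1\<^sub>m N + of_int q \<cdot>\<^sub>m pair_op X j)"
proof -
  let ?term = "\<lambda>S. (of_int (xS X S) * complex_of_real (det (submat Ot (pairD j) S))) \<cdot>\<^sub>m gammaS n \<gamma> S"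
  have "?term {fst p, snd p} = \<i> \<cdot>\<^sub>m ((mode_coeff X (2*j-1) (fst p) * mode_coeff X (2*j) (snd p) -
      mode_coeff X (2*j-1) (snd p) * mode_coeff X (2*j) (fst p)) \<cdot>\<^sub>m (\<gamma> (fst p) * \<gamma> (snd p)))"
    if pI: "p \<in> index_pairs (2*n)" for p
  proof -
    obtain a b where p: "p = (a, b)" "a < b" "1 \<le> a" "b \<le> 2*n" using pI by (cases p) auto
    have "complex_of_int (xS X {a, b}) = sign_flip X a * sign_flip X b"
      using p X by (simp add: xS_eq_prod_sign_flip)
    moreover have "2*j-2 = 2*j-1-1" by simp
    ultimately show ?thesis unfolding p(1) using p j
      by (simp add: det_submat_pairD gammaS_doubleton smult_smult_mat mode_coeff_def algebra_simps)
  qed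
  then have "msum N ?term (SS n 2) = msum N (\<lambda>p. \<i> \<cdot>\<^sub>m ((mode_coeff X (2*j-1) (fst p) * mode_coeff X (2*j) (snd p) -
      mode_coeff X (2*j-1) (snd p) * mode_coeff X (2*j) (fst p)) \<cdot>\<^sub>m (\<gamma> (fst p) * \<gamma> (snd p)))) (index_pairs (2*n))"
    unfolding SS_two_eq_image_index_pairs
    by (subst msum_reindex) (auto simp: inj_on_def doubleton_eq_iff intro!: msum_cong)
  also have "\<dots> = \<i> \<cdot>\<^sub>m (mode X (2*j-1) * mode X (2*j))"
    using j by (subst mode_mult_mode) (auto intro: msum_smult)
  finally show ?thesis by (simp add: G_R_def pair_op_def)
qed

end

lemma sorted_wrt_concat_pairs:
  "sorted_wrt (<) js \<Longrightarrow> 0 \<notin> set js \<Longrightarrow> sorted_wrt (<) (concat (map (\<lambda>j. [2*j-1, 2*j::nat]) js))"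
proof (induction js)
  case (Cons j js)
  have "\<forall>y\<in>set (concat (map (\<lambda>j. [2*j-1, 2*j::nat]) js)). 2*j < y"
    using Cons.prems by auto
  then show ?case using Cons by (auto simp: sorted_wrt_append)
qed simp

lemma sorted_list_of_set_Union_pairD:
  assumes "finite J" "0 \<notin> J"
  shows "sorted_list_of_set (\<Union>(pairD ` J)) = concat (map (\<lambda>j. [2*j-1, 2*j]) (sorted_list_of_set J))"
proof (rule sorted_list_of_set_eqI)
  have "sorted_wrt (<) (concat (map (\<lambda>j. [2*j-1, 2*j]) (sorted_list_of_set J)))"
    using assms by (intro sorted_wrt_concat_pairs) auto
  then show "sorted (concat (map (\<lambda>j. [2*j-1, 2*j]) (sorted_list_of_set J)))"
    "distinct (concat (map (\<lambda>j. [2*j-1, 2*j]) (sorted_list_of_set J)))"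
    by (auto simp: strict_sorted_iff)
qed (use assms in \<open>auto simp: pairD_def\<close>)

lemma filter_upt_eq_sorted_list_of_set:
  assumes "J \<subseteq> {1..n}"
  shows "filter (\<lambda>j. j \<in> J) [1..<n+1] = sorted_list_of_set J"
proof (rule sym, rule sorted_list_of_set_eqI)
  show "sorted (filter (\<lambda>j. j \<in> J) [1..<n+1])"
    using sorted_upt[of 1 "n+1"] by (rule sorted_wrt_filter)
qed (use assms in \<open>auto intro: finite_subset\<close>)

lemma i_power_choose_two: "\<i> ^ (2*k choose 2) = \<i> ^ k"
proof -
  have "even (k * (k-1))" by auto
  then obtain t where t: "k * (k-1) = 2 * t" by blast
  have c: "2*k choose 2 = k + 2 * (k * (k - 1))"
    by (cases k) (auto simp: choose_two algebra_simps)
  have "\<i> ^ (2*k choose 2) = \<i> ^ k * (\<i> ^ 4) ^ t" unfolding c t by (simp add: power_add power_mult)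
  then show ?thesis by simp
qed

context majorana_rotation
begin

definition pair_prod :: "nat set \<Rightarrow> nat set \<Rightarrow> complex mat" where
  "pair_prod J X = foldr (\<lambda>j M. (if j \<in> J then pair_op X j else 1\<^sub>m N) * M) [1..<n+1] (1\<^sub>m N)"

lemma pair_prod_carrier [simp]: "pair_prod J X \<in> carrier_mat N N"
  unfolding pair_prod_def by (rule foldr_mult_carrier) auto

lemma pair_prod_empty: "pair_prod {} X = 1\<^sub>m N"
proof -
  have "foldr (\<lambda>j M. (if j \<in> {} then pair_op X j else 1\<^sub>m N) * M) L (1\<^sub>m N) = 1\<^sub>m N" for L
    by (induction L) auto
  then show ?thesis unfolding pair_prod_def .
qed

lemma pair_prod_eq_mprod_mode:
  assumes "J \<subseteq> {1..n}"
  shows "pair_prod J X = (\<i> ^ card J) \<cdot>\<^sub>m mprod N (map (mode X) (sorted_list_of_set (\<Union>(pairD ` J))))"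
proof -
  have drop_ones: "foldr (\<lambda>j M. (if j \<in> J then pair_op X j else 1\<^sub>m N) * M) L (1\<^sub>m N) =
      foldr (\<lambda>j M. pair_op X j * M) (filter (\<lambda>j. j \<in> J) L) (1\<^sub>m N)" for L
    by (induction L) (auto simp: left_mult_one_mat[OF foldr_mult_carrier])
  have expand: "foldr (\<lambda>j M. pair_op X j * M) js (1\<^sub>m N) =
      (\<i> ^ length js) \<cdot>\<^sub>m mprod N (map (mode X) (concat (map (\<lambda>j. [2*j-1, 2*j]) js)))" for js
  proof (induction js)
    case (Cons j js)
    have "mprod N (map (mode X) (concat (map (\<lambda>j. [2*j-1, 2*j]) js))) \<in> carrier_mat N N"
      by (rule mprod_carrier) auto
    with Cons show ?case by (simp add: pair_op_def square_mat_simps mult.commute)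
  qed simp
  have "finite J" "0 \<notin> J" using assms finite_subset by auto
  then show ?thesis
    unfolding pair_prod_def drop_ones filter_upt_eq_sorted_list_of_set[OF assms] expand
      sorted_list_of_set_Union_pairD[OF \<open>finite J\<close> \<open>0 \<notin> J\<close>] by simp
qed

end

section \<open>Bijections between ordered index sets and the determinant\<close>

text \<open>Transports a permutation \<open>p\<close> of positions to the bijection \<open>rs ! i \<mapsto> ss ! p i\<close>.\<close>

definition list_bij_of_perm :: "nat list \<Rightarrow> nat list \<Rightarrow> (nat \<Rightarrow> nat) \<Rightarrow> nat \<Rightarrow> nat" where
  "list_bij_of_perm rs ss p = restrict (\<lambda>r. ss ! p (the_inv_into {0..<length rs} (nth rs) r)) (set rs)"

lemma list_bij_of_perm_nth:
  "distinct rs \<Longrightarrow> i < length rs \<Longrightarrow> list_bij_of_perm rs ss p (rs ! i) = ss ! p i"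
  by (simp add: list_bij_of_perm_def the_inv_into_f_f inj_on_nth)

lemma inj_on_list_bij_of_perm:
  assumes "distinct rs" "distinct ss" "length rs = length ss"
  shows "inj_on (list_bij_of_perm rs ss) {p. p permutes {0..<length rs}}"
proof (rule inj_onI)
  fix p q assume p: "p \<in> {p. p permutes {0..<length rs}}" and q: "q \<in> {p. p permutes {0..<length rs}}"
    and eq: "list_bij_of_perm rs ss p = list_bij_of_perm rs ss q"
  show "p = q"
  proof
    fix i show "p i = q i"
    proof (cases "i < length rs")
      case True
      then have "ss ! p i = ss ! q i" using eq list_bij_of_perm_nth[OF assms(1)] by metis
      then show ?thesis using assms(2,3) True p q by (simp add: nth_eq_iff_index_eq permutes_in_image)
    qed (use p q in \<open>simp add: permutes_def\<close>)
  qed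
qed

lemma list_bij_of_perm_image:
  assumes "distinct rs" "distinct ss" "length rs = length ss" "set ss \<subseteq> A"
  shows "list_bij_of_perm rs ss ` {p. p permutes {0..<length rs}} =
    {f \<in> PiE (set rs) (\<lambda>_. A). bij_betw f (set rs) (set ss)}"
proof -
  let ?m = "length rs"
  have brs: "bij_betw (nth rs) {0..<?m} (set rs)" and bss: "bij_betw (nth ss) {0..<?m} (set ss)"
    using assms(1-3) by (auto intro!: bij_betw_nth)
  have bio: "bij_betw (the_inv_into {0..<?m} (nth rs)) (set rs) {0..<?m}"
    using brs by (rule bij_betw_the_inv_into)
  show ?thesis
  proof (intro equalityI subsetI)
    fix f assume "f \<in> list_bij_of_perm rs ss ` {p. p permutes {0..<?m}}"
    then obtain p where p: "p permutes {0..<?m}" and f: "f = list_bij_of_perm rs ss p" by auto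
    have "bij_betw (\<lambda>r. ss ! p (the_inv_into {0..<?m} (nth rs) r)) (set rs) (set ss)"
      using bij_betw_trans[OF bij_betw_trans[OF bio permutes_imp_bij[OF p]] bss] by (simp add: comp_def)
    then have "bij_betw f (set rs) (set ss)"
      unfolding f list_bij_of_perm_def by (rule bij_betw_cong[THEN iffD1, rotated]) simp
    moreover have "f \<in> PiE (set rs) (\<lambda>_. A)"
      using \<open>bij_betw f (set rs) (set ss)\<close> assms(4) f
      by (auto simp: list_bij_of_perm_def bij_betw_def)
    ultimately show "f \<in> {f \<in> PiE (set rs) (\<lambda>_. A). bij_betw f (set rs) (set ss)}" by simp
  next
    fix f assume "f \<in> {f \<in> PiE (set rs) (\<lambda>_. A). bij_betw f (set rs) (set ss)}"
    then have fP: "f \<in> PiE (set rs) (\<lambda>_. A)" and bf: "bij_betw f (set rs) (set ss)" by auto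
    let ?is = "the_inv_into {0..<?m} (nth ss)"
    define p where "p i = (if i < ?m then ?is (f (rs ! i)) else i)" for i
    have "bij_betw (\<lambda>i. ?is (f (rs ! i))) {0..<?m} {0..<?m}"
      using bij_betw_trans[OF bij_betw_trans[OF brs bf] bij_betw_the_inv_into[OF bss]]
      by (simp add: comp_def)
    then have "bij_betw p {0..<?m} {0..<?m}"
      unfolding p_def by (rule bij_betw_cong[THEN iffD1, rotated]) simp
    then have pP: "p permutes {0..<?m}" by (auto intro!: bij_imp_permutes simp: p_def)
    have "list_bij_of_perm rs ss p r = f r" for r
    proof (cases "r \<in> set rs")
      case True
      then obtain i where i: "i < ?m" "r = rs ! i" by (auto simp: in_set_conv_nth)
      then have "f r \<in> set ss" using bf by (auto simp: bij_betw_def)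
      then show ?thesis using i assms(1,3) bss
        by (simp add: list_bij_of_perm_nth p_def f_the_inv_into_f_bij_betw)
    qed (use fP in \<open>simp add: list_bij_of_perm_def PiE_def extensional_def\<close>)
    then have "f = list_bij_of_perm rs ss p" by (simp add: fun_eq_iff)
    then show "f \<in> list_bij_of_perm rs ss ` {p. p permutes {0..<?m}}" using pP by blast
  qed
qed

lemma det_submat_sum_permutes:
  assumes "finite R" "finite S" "card R = m" "card S = m"
  shows "det (submat Ot R S) = (\<Sum>p | p permutes {0..<m}. of_int (sign p) *
    (\<Prod>i = 0..<m. Ot $$ (sorted_list_of_set R ! i - 1, sorted_list_of_set S ! p i - 1)))"
proof -
  have c: "submat Ot R S \<in> carrier_mat m m" using assms by (simp add: submat_def Let_def)
  show ?thesis unfolding det_def'[OF c] using assms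
    by (auto simp: submat_def Let_def permutes_in_image intro!: sum.cong prod.cong)
qed

lemma Union_pairD_subset: "J \<subseteq> {1..n} \<Longrightarrow> \<Union>(pairD ` J) \<subseteq> {1..2*n}"
proof
  fix x assume "J \<subseteq> {1..n}" "x \<in> \<Union>(pairD ` J)"
  then obtain j where "j \<in> {1..n}" "x \<in> pairD j" by auto
  then show "x \<in> {1..2*n}" by (auto simp: pairD_def)
qed

lemma card_Union_pairD:
  assumes "finite J" "0 \<notin> J"
  shows "card (\<Union>(pairD ` J)) = 2 * card J"
proof -
  have "length (concat (map (\<lambda>j. [2*j-1, 2*j::nat]) js)) = 2 * length js" for js
    by (induction js) auto
  then have "length (sorted_list_of_set (\<Union>(pairD ` J))) = 2 * card J"
    by (simp add: sorted_list_of_set_Union_pairD[OF assms])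
  then show ?thesis by simp
qed

context majorana_rotation
begin

lemma mode_term_list_bij_of_perm:
  assumes rs: "distinct rs" "length rs = m" and ss: "distinct ss" "length ss = m" "set ss \<subseteq> {1..2*n}"
    and p: "p permutes {0..<m}"
  shows "(\<Prod>r\<in>set rs. complex_of_real (Ot $$ (r-1, list_bij_of_perm rs ss p r - 1))) \<cdot>\<^sub>m
      mprod N (map (\<lambda>r. \<gamma> (list_bij_of_perm rs ss p r)) rs) =
    (of_int (sign p) * (\<Prod>i = 0..<m. complex_of_real (Ot $$ (rs ! i - 1, ss ! p i - 1)))) \<cdot>\<^sub>m
      mprod N (map \<gamma> ss)"
proof -
  let ?h = "list_bij_of_perm rs ss p"
  have h: "\<And>i. i < m \<Longrightarrow> ?h (rs ! i) = ss ! p i" using rs by (simp add: list_bij_of_perm_nth)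
  have "(\<Prod>r\<in>set rs. complex_of_real (Ot $$ (r-1, ?h r - 1))) =
      (\<Prod>i = 0..<m. complex_of_real (Ot $$ (rs ! i - 1, ?h (rs ! i) - 1)))"
    using prod.reindex_bij_betw[OF bij_betw_nth[OF rs(1) refl refl],
        of "\<lambda>r. complex_of_real (Ot $$ (r-1, ?h r - 1))"] rs(2)
    by (simp add: lessThan_atLeast0)
  also have "\<dots> = (\<Prod>i = 0..<m. complex_of_real (Ot $$ (rs ! i - 1, ss ! p i - 1)))"
    using h by (intro prod.cong) auto
  moreover have "map (\<lambda>r. \<gamma> (?h r)) rs = map \<gamma> (map (\<lambda>i. ss ! p i) [0..<m])"
    by (rule nth_equalityI) (simp_all add: h rs(2))
  ultimately show ?thesis
    using mprod_gamma_permute[OF ss(1,3,2) p] by (simp add: smult_smult_mat mult.commute)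
qed

lemma msum_bij_betw_mode_terms:
  assumes R: "finite R" and S: "S \<subseteq> {1..2*n}" and card: "card R = card S"
  shows "msum N (\<lambda>f. (\<Prod>r\<in>R. complex_of_real (Ot $$ (r-1, f r - 1))) \<cdot>\<^sub>m
      mprod N (map (\<lambda>r. \<gamma> (f r)) (sorted_list_of_set R)))
      {f \<in> PiE R (\<lambda>_. {1..2*n}). bij_betw f R S}
    = complex_of_real (det (submat Ot R S)) \<cdot>\<^sub>m mprod N (map \<gamma> (sorted_list_of_set S))"
proof -
  define rs where "rs = sorted_list_of_set R"
  define ss where "ss = sorted_list_of_set S"
  define m where "m = card R"
  have fS: "finite S" using S finite_subset by blast
  have rs: "distinct rs" "set rs = R" "length rs = m" unfolding rs_def m_def using R by auto
  have ss: "distinct ss" "set ss = S" "length ss = m" "set ss \<subseteq> {1..2*n}"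
    unfolding ss_def m_def using fS S card by auto
  let ?h = "list_bij_of_perm rs ss"
  let ?c = "\<lambda>p. of_int (sign p) * (\<Prod>i = 0..<m. complex_of_real (Ot $$ (rs ! i - 1, ss ! p i - 1)))"
  have summand: "(\<Prod>r\<in>R. complex_of_real (Ot $$ (r-1, ?h p r - 1))) \<cdot>\<^sub>m mprod N (map (\<lambda>r. \<gamma> (?h p r)) rs)
      = ?c p \<cdot>\<^sub>m mprod N (map \<gamma> ss)" if "p permutes {0..<m}" for p
    using mode_term_list_bij_of_perm[OF rs(1,3) ss(1,3,4) that] rs(2) by simp
  have "msum N (\<lambda>f. (\<Prod>r\<in>R. complex_of_real (Ot $$ (r-1, f r - 1))) \<cdot>\<^sub>m mprod N (map (\<lambda>r. \<gamma> (f r)) rs))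
      {f \<in> PiE R (\<lambda>_. {1..2*n}). bij_betw f R S}
    = msum N (\<lambda>p. ?c p \<cdot>\<^sub>m mprod N (map \<gamma> ss)) {p. p permutes {0..<m}}"
  proof -
    have img: "{f \<in> PiE R (\<lambda>_. {1..2*n}). bij_betw f R S} = ?h ` {p. p permutes {0..<m}}"
      using list_bij_of_perm_image[OF rs(1) ss(1) _ ss(4)] rs ss by simp
    have inj: "inj_on ?h {p. p permutes {0..<m}}"
      using inj_on_list_bij_of_perm[OF rs(1) ss(1)] rs ss by simp
    show ?thesis
      unfolding img msum_reindex[OF inj] comp_def by (intro msum_cong summand) simp
  qed
  also have "\<dots> = (\<Sum>p | p permutes {0..<m}. ?c p) \<cdot>\<^sub>m mprod N (map \<gamma> ss)"
    using ss by (intro msum_smult_const) simp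
  also have "(\<Sum>p | p permutes {0..<m}. ?c p) = complex_of_real (det (submat Ot R S))"
    using det_submat_sum_permutes[OF R fS refl card[symmetric]] by (simp add: rs_def ss_def m_def)
  finally show ?thesis unfolding rs_def ss_def .
qed

end

context majorana_rotation
begin

lemma sum_Pow_xS_mode_coeff:
  assumes S: "S \<subseteq> {1..2*n}" "even (card S)" and R: "finite R" "card R = card S"
    and f: "f \<in> PiE R (\<lambda>_. {1..2*n})"
  shows "(\<Sum>X\<in>Pow {1..2*n}. of_int (xS X S) * (\<Prod>r\<in>R. mode_coeff X r (f r))) =
    (\<Prod>r\<in>R. complex_of_real (Ot $$ (r-1, f r - 1))) * (if bij_betw f R S then 2^(2*n) else 0)"
proof -
  let ?P = "\<Prod>r\<in>R. complex_of_real (Ot $$ (r-1, f r - 1))"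
  have "of_int (xS X S) * (\<Prod>r\<in>R. mode_coeff X r (f r)) =
      ?P * ((\<Prod>a\<in>S. sign_flip X a) * (\<Prod>r\<in>R. sign_flip X (f r)))" if "X \<in> Pow {1..2*n}" for X
  proof -
    have "finite X" "finite S" using that S(1) finite_subset by auto
    then show ?thesis using S(2) by (simp add: xS_eq_prod_sign_flip mode_coeff_def prod.distrib)
  qed
  then have "(\<Sum>X\<in>Pow {1..2*n}. of_int (xS X S) * (\<Prod>r\<in>R. mode_coeff X r (f r))) =
      ?P * (\<Sum>X\<in>Pow {1..2*n}. (\<Prod>a\<in>S. sign_flip X a) * (\<Prod>r\<in>R. sign_flip X (f r)))"
    by (simp add: sum_distrib_left)
  also have "(\<Sum>X\<in>Pow {1..2*n}. (\<Prod>a\<in>S. sign_flip X a) * (\<Prod>r\<in>R. sign_flip X (f r))) =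
      (if bij_betw f R S then 2 ^ card {1..2*n} else 0)"
    using S(1) R f by (intro sum_Pow_sign_flip_prod) (auto simp: PiE_iff)
  finally show ?thesis by simp
qed

text \<open>Expanding the product of modes over choice functions \<open>f : R \<rightarrow> [2n]\<close>, only the bijections
 onto \<open>S\<close> survive the sum over \<open>X\<close>.\<close>

lemma msum_xS_pair_prod:
  assumes J: "J \<subseteq> {1..n}" and S: "S \<in> SS n (2 * card J)"
  defines "R \<equiv> \<Union>(pairD ` J)"
  shows "msum N (\<lambda>X. of_int (xS X S) \<cdot>\<^sub>m pair_prod J X) (Pow {1..2*n}) =
    (2^(2*n) * complex_of_real (det (submat Ot R S))) \<cdot>\<^sub>m gammaS n \<gamma> S"
proof -
  let ?I = "{1..2*n}" and ?k = "card J"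
  let ?rs = "sorted_list_of_set R"
  let ?M = "\<lambda>f. mprod N (map (\<lambda>r. \<gamma> (f r)) ?rs)"
  let ?P = "\<lambda>f. \<Prod>r\<in>R. complex_of_real (Ot $$ (r-1, f r - 1))"
  let ?B = "PiE R (\<lambda>_. ?I)"
  have fJ: "finite J" "0 \<notin> J" using J finite_subset by auto
  have SI: "S \<subseteq> ?I" "card S = 2 * ?k" using S by (auto simp: SS_def)
  have RI: "R \<subseteq> ?I" "finite R" "card R = card S"
    using Union_pairD_subset[OF J] card_Union_pairD[OF fJ] SI unfolding R_def
    by (auto intro: finite_subset[OF _ finite_atLeastAtMost])
  have cM: "?M f \<in> carrier_mat N N" if "f \<in> ?B" for f
    using that RI(2) by (intro mprod_carrier) (auto simp: PiE_iff)
  have expand: "pair_prod J X = (\<i> ^ ?k) \<cdot>\<^sub>m msum N (\<lambda>f. (\<Prod>r\<in>R. mode_coeff X r (f r)) \<cdot>\<^sub>m ?M f) ?B" for X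
    using mprod_msum_distrib[of ?rs ?I \<gamma> N "mode_coeff X"] RI
    by (simp add: pair_prod_eq_mprod_mode[OF J] mode_def[abs_def] R_def[symmetric])
  have "msum N (\<lambda>X. of_int (xS X S) \<cdot>\<^sub>m pair_prod J X) (Pow ?I) = (\<i> ^ ?k) \<cdot>\<^sub>m
      msum N (\<lambda>X. of_int (xS X S) \<cdot>\<^sub>m msum N (\<lambda>f. (\<Prod>r\<in>R. mode_coeff X r (f r)) \<cdot>\<^sub>m ?M f) ?B) (Pow ?I)"
    by (subst msum_smult[symmetric]) (auto simp: expand smult_smult_mat mult.commute intro!: msum_cong)
  also have "\<dots> = (\<i> ^ ?k) \<cdot>\<^sub>m msum N (\<lambda>f. (\<Sum>X\<in>Pow ?I. of_int (xS X S) * (\<Prod>r\<in>R. mode_coeff X r (f r)))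
      \<cdot>\<^sub>m ?M f) ?B"
    using cM by (simp add: msum_smult_msum_swap)
  also have "\<dots> = (\<i> ^ ?k) \<cdot>\<^sub>m msum N (\<lambda>f. 2^(2*n) \<cdot>\<^sub>m (if bij_betw f R S then ?P f \<cdot>\<^sub>m ?M f else 0\<^sub>m N N)) ?B"
  proof (rule arg_cong[where f = "\<lambda>M. _ \<cdot>\<^sub>m M"], rule msum_cong)
    fix f assume f: "f \<in> ?B"
    have "even (card S)" using SI(2) by simp
    from sum_Pow_xS_mode_coeff[OF SI(1) this RI(2,3) f] cM[OF f]
    show "(\<Sum>X\<in>Pow ?I. of_int (xS X S) * (\<Prod>r\<in>R. mode_coeff X r (f r))) \<cdot>\<^sub>m ?M f =
        2^(2*n) \<cdot>\<^sub>m (if bij_betw f R S then ?P f \<cdot>\<^sub>m ?M f else 0\<^sub>m N N)"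
      by (auto simp: smult_smult_mat zero_smult_mat mult.commute)
  qed
  also have "\<dots> = (\<i> ^ ?k * 2^(2*n)) \<cdot>\<^sub>m msum N (\<lambda>f. ?P f \<cdot>\<^sub>m ?M f) {f \<in> ?B. bij_betw f R S}"
    using cM RI(2) by (simp add: msum_filter finite_PiE msum_smult smult_smult_mat cong: if_cong)
  also have "\<dots> = (\<i> ^ ?k * 2^(2*n) * complex_of_real (det (submat Ot R S))) \<cdot>\<^sub>m mprod N (map \<gamma> (sorted_list_of_set S))"
    unfolding msum_bij_betw_mode_terms[OF RI(2) SI(1) RI(3)] by (simp add: smult_smult_mat)
  also have "\<dots> = (2^(2*n) * complex_of_real (det (submat Ot R S))) \<cdot>\<^sub>m gammaS n \<gamma> S"
    unfolding gammaS_eq_mprod SI(2) i_power_choose_two by (simp add: smult_smult_mat mult_ac)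
  finally show ?thesis .
qed

end

lemma prod_sign_mem:
  assumes "\<And>j. j \<in> A \<Longrightarrow> q j \<in> {-1, 1 :: int}"
  shows "(\<Prod>j\<in>A. q j) \<in> {-1, 1}"
proof -
  have "\<bar>q j\<bar> = 1" if "j \<in> A" for j using assms[OF that] by auto
  then have "\<bar>\<Prod>j\<in>A. q j\<bar> = 1" by (simp add: abs_prod)
  then show ?thesis by (auto simp: abs_if split: if_splits)
qed

lemma indicator_eq_sign_average:
  "E \<in> {-1, 1 :: int} \<Longrightarrow> e \<in> {-1, 1} \<Longrightarrow> (if E = e then 1 else 0 :: complex) = 1/2 + of_int (e * E) / 2"
  by auto

lemma qR_Union_pairD: "J \<subseteq> {1..n} \<Longrightarrow> qR n q (\<Union>(pairD ` J)) = (\<Prod>j\<in>J. q j)"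
proof -
  assume J: "J \<subseteq> {1..n}"
  have "{j \<in> {1..n}. pairD j \<subseteq> \<Union>(pairD ` J)} = J"
  proof (intro equalityI subsetI)
    fix j assume "j \<in> {j \<in> {1..n}. pairD j \<subseteq> \<Union>(pairD ` J)}"
    then obtain j' where "j' \<in> J" "2*j \<in> pairD j'" by (auto simp: pairD_def)
    moreover have "1 \<le> j'" using \<open>j' \<in> J\<close> J by auto
    ultimately have "2*j = 2*j' - 1 \<or> 2*j = 2*j'" by (auto simp: pairD_def)
    then have "j = j'" using \<open>1 \<le> j'\<close> by presburger
    with \<open>j' \<in> J\<close> show "j \<in> J" by simp
  qed (use J in auto)
  then show ?thesis by (simp add: qR_def)
qed

context majorana_rotation
begin

lemma G_op_eq_foldr_pair_op:
  assumes "finite X"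
  shows "G_op n \<gamma> Ot q X = ((2 ^ (2*n)) ^ (n - 1)) \<cdot>\<^sub>m
     foldr (\<lambda>j M. ((1 / 2 ^ (2*n+1)) \<cdot>\<^sub>m (1\<^sub>m N + of_int (q j) \<cdot>\<^sub>m pair_op X j)) * M) [1..<n+1] (1\<^sub>m N)"
  unfolding G_op_def using assms by (intro arg_cong[where f = "\<lambda>M. _ \<cdot>\<^sub>m M"] foldr_cong) (auto simp: G_R_eq_pair_op)

lemma G_op_carrier: "finite X \<Longrightarrow> G_op n \<gamma> Ot q X \<in> carrier_mat N N"
  unfolding G_op_eq_foldr_pair_op by (simp add: foldr_mult_carrier)

text \<open>Each of the \<open>n\<close> factors of \<open>G\<close> carries \<open>2^-(2n+1)\<close>, so the sum over \<open>q\<close> produces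
 \<open>2^-(2n\<^sup>2)\<close>, which the prefactor \<open>(2^(2n))^(n-1)\<close> of \<open>G\<close> turns into \<open>2^-(2n)\<close>. This needs
 \<open>1 \<le> n\<close>: for \<open>n = 0\<close> the truncated exponent \<open>n - 1\<close> is \<open>0\<close>.\<close>

lemma msum_outcomes_weighted:
  assumes "1 \<le> n" "J \<subseteq> {1..n}"
  shows "msum N (\<lambda>(q, X). (w X * of_int (\<Prod>j\<in>J. q j)) \<cdot>\<^sub>m G_op n \<gamma> Ot q X) (outcomes n) =
    (1 / 2 ^ (2*n)) \<cdot>\<^sub>m msum N (\<lambda>X. w X \<cdot>\<^sub>m pair_prod J X) (Pow {1..2*n})"
proof -
  let ?Q = "PiE {1..n} (\<lambda>_. {-1, 1 :: int})"
  let ?c = "1 / 2 ^ (2*n+1) :: complex"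
  let ?F = "\<lambda>X q. foldr (\<lambda>j M. (?c \<cdot>\<^sub>m (1\<^sub>m N + of_int (q j) \<cdot>\<^sub>m pair_op X j)) * M) [1..<n+1] (1\<^sub>m N)"
  have "(2 ^ (2*n)) ^ (n - 1) * (2 * ?c) ^ n = 1 / 2 ^ (2*n)"
    using assms(1) by (cases n) (simp_all add: power_add power_mult_distrib field_simps power_mult[symmetric])
  then have const: "(2 ^ (2*n)) ^ (n - 1) * v * (2 * ?c) ^ n = 1 / 2 ^ (2*n) * v" for v
    by (metis mult.commute mult.left_commute)
  have qsum: "msum N (\<lambda>q. of_int (\<Prod>j\<in>J. q j) \<cdot>\<^sub>m ?F X q) ?Q = ((2 * ?c) ^ n) \<cdot>\<^sub>m pair_prod J X" for X
  proof -
    have "set [1..<n+1] \<inter> J = J" "set [1..<n+1] = {1..n}" using assms(2) by auto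
    then show ?thesis
      using assms(1) msum_signs_foldr_affine[where L = "[1..<n+1]" and N = N and A = "pair_op X" and B = "1\<^sub>m N"
          and J = J and c = ?c] by (simp add: pair_prod_def)
  qed
  have "msum N (\<lambda>(q, X). (w X * of_int (\<Prod>j\<in>J. q j)) \<cdot>\<^sub>m G_op n \<gamma> Ot q X) (outcomes n) =
      msum N (\<lambda>q. msum N (\<lambda>X. (w X * of_int (\<Prod>j\<in>J. q j)) \<cdot>\<^sub>m G_op n \<gamma> Ot q X) (Pow {1..2*n})) ?Q"
    unfolding outcomes_def by (subst msum_Sigma) (simp_all add: finite_PiE)
  also have "\<dots> =
      msum N (\<lambda>X. msum N (\<lambda>q. (w X * of_int (\<Prod>j\<in>J. q j)) \<cdot>\<^sub>m G_op n \<gamma> Ot q X) ?Q) (Pow {1..2*n})"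
    by (rule msum_swap)
  also have "\<dots> = msum N (\<lambda>X. ((2 ^ (2*n)) ^ (n - 1) * w X) \<cdot>\<^sub>m
      msum N (\<lambda>q. of_int (\<Prod>j\<in>J. q j) \<cdot>\<^sub>m ?F X q) ?Q) (Pow {1..2*n})"
    by (rule msum_cong, subst msum_smult[symmetric])
      (auto simp: G_op_eq_foldr_pair_op foldr_mult_carrier finite_subset smult_smult_mat mult_ac
        intro!: msum_cong)
  also have "\<dots> = msum N (\<lambda>X. ((2 ^ (2*n)) ^ (n - 1) * w X) \<cdot>\<^sub>m (((2 * ?c) ^ n) \<cdot>\<^sub>m pair_prod J X))
      (Pow {1..2*n})"
    by (simp only: qsum)
  also have "\<dots> = msum N (\<lambda>X. (1 / 2 ^ (2*n)) \<cdot>\<^sub>m (w X \<cdot>\<^sub>m pair_prod J X)) (Pow {1..2*n})"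
    by (rule msum_cong) (simp only: smult_smult_mat const)
  finally show ?thesis by (simp add: msum_smult)
qed

lemma msum_outcomes_G_op:
  assumes "1 \<le> n"
  shows "msum N (\<lambda>(q, X). G_op n \<gamma> Ot q X) (outcomes n) = 1\<^sub>m N"
proof -
  have "msum N (\<lambda>X. 1 \<cdot>\<^sub>m pair_prod {} X) (Pow {1..2*n}) = (\<Sum>X\<in>Pow {1..2*n}. 1) \<cdot>\<^sub>m 1\<^sub>m N"
    unfolding pair_prod_empty by (rule msum_smult_const) simp
  then show ?thesis
    using msum_outcomes_weighted[OF assms, of "{}" "\<lambda>_. 1"] by (simp add: card_Pow smult_smult_mat)
qed

lemma msum_outcomes_correlation:
  assumes "1 \<le> n" "J \<subseteq> {1..n}" "S \<in> SS n (2 * card J)"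
  defines "R \<equiv> \<Union>(pairD ` J)"
  shows "msum N (\<lambda>(q, X). of_int (xS X S * qR n q R) \<cdot>\<^sub>m G_op n \<gamma> Ot q X) (outcomes n) =
    complex_of_real (det (submat Ot R S)) \<cdot>\<^sub>m gammaS n \<gamma> S"
  using msum_outcomes_weighted[OF assms(1,2), of "\<lambda>X. of_int (xS X S)",
      unfolded msum_xS_pair_prod[OF assms(2,3)]]
  by (simp add: R_def qR_Union_pairD[OF assms(2)] smult_smult_mat)

end

context majorana_rotation
begin

lemma msum_outcomes_eS_eq:
  assumes "e \<in> {-1, 1}"
  shows "msum N (\<lambda>(q, X). G_op n \<gamma> Ot q X) {(q, X) \<in> outcomes n. eS n Ot R S q X = e} =
    (1/2) \<cdot>\<^sub>m msum N (\<lambda>(q, X). G_op n \<gamma> Ot q X) (outcomes n) +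
    (of_int (e * sgn1 (det (submat Ot R S))) / 2) \<cdot>\<^sub>m
      msum N (\<lambda>(q, X). of_int (xS X S * qR n q R) \<cdot>\<^sub>m G_op n \<gamma> Ot q X) (outcomes n)"
proof -
  let ?s = "sgn1 (det (submat Ot R S))"
  let ?G = "\<lambda>x. G_op n \<gamma> Ot (fst x) (snd x)"
  let ?w = "\<lambda>x. complex_of_int (xS (snd x) S * qR n (fst x) R)"
  have fin: "finite (outcomes n)" by (simp add: outcomes_def finite_PiE)
  have cG: "?G x \<in> carrier_mat N N" if "x \<in> outcomes n" for x
    using that by (intro G_op_carrier) (auto simp: outcomes_def finite_subset)
  have split: "(if eS n Ot R S (fst x) (snd x) = e then ?G x else 0\<^sub>m N N) =
      (1/2) \<cdot>\<^sub>m ?G x + (of_int (e * ?s) / 2) \<cdot>\<^sub>m (?w x \<cdot>\<^sub>m ?G x)" if x: "x \<in> outcomes n" for x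
  proof -
    have "fst x j \<in> {-1, 1}" if "j \<in> {1..n}" for j using x that by (auto simp: outcomes_def PiE_iff)
    then have "qR n (fst x) R \<in> {-1, 1}" unfolding qR_def by (intro prod_sign_mem) auto
    moreover have "xS (snd x) S \<in> {-1, 1}" "?s \<in> {-1, 1}" by (auto simp: xS_def sgn1_def minus_one_power_iff)
    ultimately have "eS n Ot R S (fst x) (snd x) \<in> {-1, 1}" by (auto simp: eS_def)
    from indicator_eq_sign_average[OF this assms]
    have "(if eS n Ot R S (fst x) (snd x) = e then 1 else 0) = 1/2 + of_int (e * ?s) / 2 * ?w x"
      by (simp add: eS_def mult_ac)
    with cG[OF x] show ?thesis
      by (auto simp: add_smult_distrib_right_mat[symmetric] smult_smult_mat zero_smult_mat simp del: of_int_mult)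
  qed
  have filter: "{(q, X) \<in> outcomes n. eS n Ot R S q X = e} = {x \<in> outcomes n. eS n Ot R S (fst x) (snd x) = e}"
    by auto
  have "msum N ?G {(q, X) \<in> outcomes n. eS n Ot R S q X = e} =
      msum N (\<lambda>x. (1/2) \<cdot>\<^sub>m ?G x + (of_int (e * ?s) / 2) \<cdot>\<^sub>m (?w x \<cdot>\<^sub>m ?G x)) (outcomes n)"
    unfolding filter msum_filter[OF fin] by (rule msum_cong) (rule split)
  also have "\<dots> = (1/2) \<cdot>\<^sub>m msum N ?G (outcomes n) + (of_int (e * ?s) / 2) \<cdot>\<^sub>m msum N (\<lambda>x. ?w x \<cdot>\<^sub>m ?G x) (outcomes n)"
    using cG by (simp add: msum_add msum_smult)
  finally show ?thesis by (simp only: case_prod_unfold)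
qed

end

theorem proposition2:
  fixes n k :: nat and \<gamma> :: "nat \<Rightarrow> complex mat" and Ot :: "real mat"
    and R S :: "nat set" and e :: int
  assumes "majorana_ops n \<gamma>"
    and "Ot \<in> orth_group (2*n)"
    and "k \<in> {1..n}"
    and "S \<in> SS n (2*k)"
    and "R \<in> DD n k"
    and "e \<in> {-1, 1}"
  shows "msum (maj_dim n) (\<lambda>(q, X). G_op n \<gamma> Ot q X)
           {(q, X) \<in> outcomes n. eS n Ot R S q X = e}
         = (1/2) \<cdot>\<^sub>m (1\<^sub>m (maj_dim n) +
              (of_int e * complex_of_real \<bar>det (submat Ot R S)\<bar>) \<cdot>\<^sub>m gammaS n \<gamma> S)"
proof -
  interpret majorana_rotation n \<gamma> Ot by unfold_locales (use assms in auto)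
  obtain J where J: "J \<subseteq> {1..n}" "card J = k" "R = \<Union>(pairD ` J)"
    using assms(5) by (auto simp: DD_def)
  have "1 \<le> n" using assms(3) by simp
  have S: "S \<in> SS n (2 * card J)" using assms(4) J(2) by simp
  have "gammaS n \<gamma> S \<in> carrier_mat N N"
    using S by (intro gammaS_carrier) (auto simp: SS_def intro: finite_subset[OF _ finite_atLeastAtMost])
  moreover have "of_int (sgn1 d) * complex_of_real d = complex_of_real \<bar>d\<bar>" for d
    by (simp add: sgn1_def)
  ultimately show ?thesis
    unfolding msum_outcomes_eS_eq[OF assms(6)] msum_outcomes_G_op[OF \<open>1 \<le> n\<close>] J(3)
      msum_outcomes_correlation[OF \<open>1 \<le> n\<close> J(1) S]
    by (simp add: add_smult_distrib_left_mat[of _ N N] smult_smult_mat mult_ac)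
qed

end
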